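(* Assume Assumption (I), and let $(L_k,u_k)$ be a sequence generated by Algorithm A. Let $(u_{k_n})$ be a subsequence with $u_{k_n}\rightharpoonup\bar u$ weakly in $V$. Then \[ 2\int_\Omega\psi_{\epsilon_{k_n}}'(u_{k_n}^2)\,u_{k_n+1}^2\,dx\ \to\ p\int_\Omega|\bar u|^p\,dx\qquad(n\to\infty). \]
   Context: Standing assumptions: $\Omega\subset\mathbb R^d$ bounded Lipschitz domain; $V$ real Hilbert space with inner product $\langle\cdot,\cdot\rangle_V$, $V\subset L^2(\Omega)$ with compact and dense embedding; $V^*$ dual. $F:V\to\mathbb R$ weakly lower semicontinuous, bounded below by an affine function, continuously Fréchet differentiable. $\alpha>0$, $\beta>0$, $p\in(0,1)$. Assumption (I): the standing assumptions hold; $F'$ is completely continuous ($u_n\rightharpoonup u$ in $V$ implies $F'(u_n)\to F'(u)$ in $V^*$); and $F':V\to V^*$ is Lipschitz continuous on bounded sets. For $\epsilon>0$, $\psi_\epsilon(t)=\frac p2\frac{t}{\epsilon^{2-p}}+(1-\frac p2)\epsilon^p$ if $t\in[0,\epsilon^2)$, $\psi_\epsilon(t)=t^{p/2}$ if $t\ge\epsilon^2$, $\psi_\epsilon'(t)=\frac p2\min(\epsilon^{p-2},t^{(p-2)/2})$. Algorithm A: choose a monotonically decreasing sequence $\epsilon_k\searrow0$, constants $\gamma>1$, $\tilde L>0$, and $u_0\in V$. Given $u_k$, for $L\ge0$ let problem (Q$_{k,L}$) be $\min_{u\in V} F(u_k)+F'(u_k)(u-u_k)+\frac L2\|u-u_k\|_V^2+\frac\alpha2\|u\|_V^2+\beta\int_\Omega\big[\psi_{\epsilon_k}(u_k^2)+\psi_{\epsilon_k}'(u_k^2)(u^2-u_k^2)\big]dx$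 (strongly convex, unique minimizer), and let (D$_{k,L}$) be the condition $F(u_{k+1})\le F(u_k)+F'(u_k)(u_{k+1}-u_k)+L\|u_{k+1}-u_k\|_V^2$ for its minimizer $u_{k+1}$. $L_k$ is the smallest $L\in\{0\}\cup\{\tilde L\gamma^l:l\ge0\}$ for which (D$_{k,L}$) holds, and $u_{k+1}$ is the corresponding minimizer; then $k\mapsto k+1$. *)

theory Defs
  imports "HOL-Analysis.Analysis"
begin

definition lipschitz_domain :: "'d::euclidean_space set \<Rightarrow> bool" where
  "lipschitz_domain \<Omega> \<longleftrightarrow> open \<Omega> \<and> connected \<Omega> \<and> \<Omega> \<noteq> {} \<and>
     (\<forall>x\<in>frontier \<Omega>. \<exists>r>0. \<exists>T :: 'd \<Rightarrow> 'd. orthogonal_transformation T \<and> (\<exists>e\<in>Basis. \<exists>g M.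
        (\<forall>z w. \<bar>g z - g w\<bar> \<le> M * norm (z - w)) \<and>
        (\<forall>z t. g (z + t *\<^sub>R e) = g z) \<and>
        \<Omega> \<inter> ball x r = {y \<in> ball x r. T (y - x) \<bullet> e < g (T (y - x))}))"

definition sq_int :: "'d::euclidean_space set \<Rightarrow> ('d \<Rightarrow> real) \<Rightarrow> bool" where
  "sq_int \<Omega> f \<longleftrightarrow> f \<in> borel_measurable (lebesgue_on \<Omega>) \<and>
     integrable (lebesgue_on \<Omega>) (\<lambda>x. (f x)\<^sup>2)"

definition L2norm :: "'d::euclidean_space set \<Rightarrow> ('d \<Rightarrow> real) \<Rightarrow> real" where
  "L2norm \<Omega> f = sqrt (\<integral>x. (f x)\<^sup>2 \<partial>lebesgue_on \<Omega>)"

text \<open>iota identifies V with a subspace of L2(Omega) (functions taken up to a.e. equality):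
 linear, injective, continuous, compact and with dense range.\<close>
definition compact_dense_L2_embedding ::
  "'d::euclidean_space set \<Rightarrow> ('v::real_normed_vector \<Rightarrow> 'd \<Rightarrow> real) \<Rightarrow> bool" where
  "compact_dense_L2_embedding \<Omega> \<iota> \<longleftrightarrow>
     (\<forall>v. sq_int \<Omega> (\<iota> v)) \<and>
     (\<forall>a b v w. AE x in lebesgue_on \<Omega>. \<iota> (a *\<^sub>R v + b *\<^sub>R w) x = a * \<iota> v x + b * \<iota> w x) \<and>
     (\<forall>v. (AE x in lebesgue_on \<Omega>. \<iota> v x = 0) \<longrightarrow> v = 0) \<and>
     (\<exists>C. \<forall>v. L2norm \<Omega> (\<iota> v) \<le> C * norm v) \<and>
     (\<forall>vs :: nat \<Rightarrow> 'v. bounded (range vs) \<longrightarrow> (\<exists>r g. strict_mono r \<and> sq_int \<Omega> g \<and>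
         (\<lambda>n. L2norm \<Omega> (\<lambda>x. \<iota> (vs (r n)) x - g x)) \<longlonglongrightarrow> 0)) \<and>
     (\<forall>f e. sq_int \<Omega> f \<and> e > 0 \<longrightarrow> (\<exists>v. L2norm \<Omega> (\<lambda>x. \<iota> v x - f x) < e))"

definition weak_conv :: "(nat \<Rightarrow> 'v::real_inner) \<Rightarrow> 'v \<Rightarrow> bool" where
  "weak_conv xs u \<longleftrightarrow> (\<forall>y. (\<lambda>n. inner (xs n) y) \<longlonglongrightarrow> inner u y)"

definition psi :: "real \<Rightarrow> real \<Rightarrow> real \<Rightarrow> real" where
  "psi p \<epsilon> t = (if t < \<epsilon>\<^sup>2 then p / 2 * t / \<epsilon> powr (2 - p) + (1 - p / 2) * \<epsilon> powr p
                else t powr (p / 2))"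

text \<open>derivative: p/2 * min(eps^(p-2), t^((p-2)/2)), written by cases (for t >= 0)\<close>
definition dpsi :: "real \<Rightarrow> real \<Rightarrow> real \<Rightarrow> real" where
  "dpsi p \<epsilon> t = (if t < \<epsilon>\<^sup>2 then p / 2 * \<epsilon> powr (p - 2) else p / 2 * t powr ((p - 2) / 2))"

definition Qmodel ::
  "('v::real_inner \<Rightarrow> real) \<Rightarrow> ('v \<Rightarrow> 'v \<Rightarrow>\<^sub>L real) \<Rightarrow> real \<Rightarrow> real \<Rightarrow> real \<Rightarrow>
   'd::euclidean_space set \<Rightarrow> ('v \<Rightarrow> 'd \<Rightarrow> real) \<Rightarrow> real \<Rightarrow> 'v \<Rightarrow> real \<Rightarrow> 'v \<Rightarrow> real" where
  "Qmodel F F' \<alpha> \<beta> p \<Omega> \<iota> \<epsilon> uk L u =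
     F uk + blinfun_apply (F' uk) (u - uk) + L / 2 * (norm (u - uk))\<^sup>2 + \<alpha> / 2 * (norm u)\<^sup>2
     + \<beta> * (\<integral>x. psi p \<epsilon> ((\<iota> uk x)\<^sup>2) + dpsi p \<epsilon> ((\<iota> uk x)\<^sup>2) * ((\<iota> u x)\<^sup>2 - (\<iota> uk x)\<^sup>2)
               \<partial>lebesgue_on \<Omega>)"

definition is_minimizer :: "('v \<Rightarrow> real) \<Rightarrow> 'v \<Rightarrow> bool" where
  "is_minimizer f z \<longleftrightarrow> (\<forall>u. f z \<le> f u)"

definition descent_cond ::
  "('v::real_normed_vector \<Rightarrow> real) \<Rightarrow> ('v \<Rightarrow> 'v \<Rightarrow>\<^sub>L real) \<Rightarrow> 'v \<Rightarrow> real \<Rightarrow> 'v \<Rightarrow> bool" where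
  "descent_cond F F' uk L z \<longleftrightarrow>
     F z \<le> F uk + blinfun_apply (F' uk) (z - uk) + L * (norm (z - uk))\<^sup>2"

definition L_candidates :: "real \<Rightarrow> real \<Rightarrow> real set" where
  "L_candidates Lt \<gamma> = insert 0 {Lt * \<gamma> ^ l | l. True}"

definition algA_sequence ::
  "('v::real_inner \<Rightarrow> real) \<Rightarrow> ('v \<Rightarrow> 'v \<Rightarrow>\<^sub>L real) \<Rightarrow> real \<Rightarrow> real \<Rightarrow> real \<Rightarrow>
   'd::euclidean_space set \<Rightarrow> ('v \<Rightarrow> 'd \<Rightarrow> real) \<Rightarrow> (nat \<Rightarrow> real) \<Rightarrow> real \<Rightarrow> real \<Rightarrow> 'v \<Rightarrow>
   (nat \<Rightarrow> real) \<Rightarrow> (nat \<Rightarrow> 'v) \<Rightarrow> bool" where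
  "algA_sequence F F' \<alpha> \<beta> p \<Omega> \<iota> \<epsilon> \<gamma> Lt u0 Ls u \<longleftrightarrow>
     u 0 = u0 \<and>
     (\<forall>k. Ls k \<in> L_candidates Lt \<gamma> \<and>
          is_minimizer (Qmodel F F' \<alpha> \<beta> p \<Omega> \<iota> (\<epsilon> k) (u k) (Ls k)) (u (Suc k)) \<and>
          descent_cond F F' (u k) (Ls k) (u (Suc k)) \<and>
          (\<forall>L\<in>L_candidates Lt \<gamma>. L < Ls k \<longrightarrow>
             (\<forall>z. is_minimizer (Qmodel F F' \<alpha> \<beta> p \<Omega> \<iota> (\<epsilon> k) (u k) L) z \<longrightarrow>
                  \<not> descent_cond F F' (u k) L z)))"

end

theory Submission
  imports Defs
begin

text \<open>
  The energy \<open>E\<^sub>\<epsilon>(u) = F(u) + \<alpha>/2 \<parallel>u\<parallel>\<^sup>2 + \<beta> \<integral>\<psi>\<^sub>\<epsilon>(u\<^sup>2)\<close> decreases along Algorithm A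
  by at least \<open>\<alpha>/2 \<parallel>u\<^sub>k\<^sub>+\<^sub>1 - u\<^sub>k\<parallel>\<^sup>2\<close> per step: \<open>\<psi>\<^sub>\<epsilon>\<close> is concave, so the model majorises
  \<open>E\<^sub>\<epsilon>\<close>, and \<open>E\<^sub>\<epsilon>\<close> is monotone in \<open>\<epsilon>\<close>. As \<open>F\<close> has an affine minorant, the iterates are
  bounded and the steps are square summable. Hence \<open>u\<^sub>k\<^sub>n\<close> and \<open>u\<^sub>k\<^sub>n\<^sub>+\<^sub>1\<close> both converge
  to the weak limit \<open>ub\<close> strongly in \<open>L\<^sup>2\<close> (compact embedding, the limit being identified
  through the Riesz representation), so \<open>\<integral>\<bar>u\<bar>\<^sup>p\<close> and \<open>\<integral>\<psi>\<^sub>\<epsilon>(u\<^sup>2)\<close> converge to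
  \<open>\<integral>\<bar>ub\<bar>\<^sup>p\<close> along both sequences. Writing \<open>w\<^sub>n = \<psi>'\<^sub>\<epsilon>(u\<^sub>k\<^sub>n\<^sup>2)\<close>, one has
  \<open>2 \<integral> w\<^sub>n u\<^sub>k\<^sub>n\<^sup>2 \<rightarrow> p \<integral>\<bar>ub\<bar>\<^sup>p\<close> because \<open>2 \<psi>'\<^sub>\<epsilon>(t) t\<close> is within \<open>p \<epsilon>\<^sup>p\<close> of \<open>p t\<^sup>p\<^sup>/\<^sup>2\<close>,
  and \<open>\<integral> w\<^sub>n (u\<^sub>k\<^sub>n\<^sub>+\<^sub>1\<^sup>2 - u\<^sub>k\<^sub>n\<^sup>2)\<close> is squeezed between the increment of \<open>\<integral>\<psi>\<^sub>\<epsilon>(u\<^sup>2)\<close>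
  (concavity) and a gap in the model that vanishes because \<open>F'\<close> is completely continuous
  and the steps tend to zero (minimality of \<open>u\<^sub>k\<^sub>+\<^sub>1\<close>).
\<close>

lemma quadratic_nonneg_imp_discriminant_le:
  fixes a b c :: real
  assumes nonneg: "\<And>t. 0 \<le> a + 2 * b * t + c * t\<^sup>2"
  shows "b\<^sup>2 \<le> a * c"
proof -
  have a: "0 \<le> a" using nonneg[of 0] by simp
  have even: "0 \<le> a + c * t\<^sup>2" for t
    using nonneg[of t] nonneg[of "- t"] by simp
  have "0 \<le> c"
  proof (rule ccontr)
    assume "\<not> 0 \<le> c"
    moreover have "(sqrt ((a + 1) / - c))\<^sup>2 = (a + 1) / - c"
      using a \<open>\<not> 0 \<le> c\<close> by (intro real_sqrt_pow2) (simp add: divide_nonneg_neg)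
    ultimately have "c * (sqrt ((a + 1) / - c))\<^sup>2 = - (a + 1)" by simp
    then show False using even[of "sqrt ((a + 1) / - c)"] by simp
  qed
  show ?thesis
  proof (cases "c = 0")
    case True
    have "b = 0"
    proof (rule ccontr)
      assume "b \<noteq> 0"
      then have "a + 2 * b * (- (a + 1) / (2 * b)) = - 1" by (simp add: field_simps)
      then show False using nonneg[of "- (a + 1) / (2 * b)"] True by simp
    qed
    then show ?thesis using True by simp
  next
    case False
    with \<open>0 \<le> c\<close> have "c > 0" by simp
    have "a + 2 * b * (- b / c) + c * (- b / c)\<^sup>2 = a - b\<^sup>2 / c"
      using \<open>c > 0\<close> by (simp add: power2_eq_square field_simps)
    then have "b\<^sup>2 / c \<le> a" using nonneg[of "- b / c"] by simp
    then show ?thesis using \<open>c > 0\<close> by (simp add: pos_divide_le_eq mult.commute)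
  qed
qed

lemma powr_add_le:
  fixes a b p :: real
  assumes "0 \<le> a" "0 \<le> b" "0 < p" "p \<le> 1"
  shows "(a + b) powr p \<le> a powr p + b powr p"
proof (cases "a + b = 0")
  case True
  then show ?thesis using assms by simp
next
  case False
  then have s: "a + b > 0" using assms by simp
  have "a / (a + b) \<le> (a / (a + b)) powr p" "b / (a + b) \<le> (b / (a + b)) powr p"
    using powr_mono'[of p 1 "a / (a + b)"] powr_mono'[of p 1 "b / (a + b)"] assms s by simp_all
  moreover have "a / (a + b) + b / (a + b) = 1" using s by (simp add: add_divide_distrib[symmetric])
  ultimately have "1 \<le> (a / (a + b)) powr p + (b / (a + b)) powr p" by linarith
  also have "\<dots> = (a powr p + b powr p) / (a + b) powr p"
    using assms s by (simp add: powr_divide add_divide_distrib)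
  finally show ?thesis using s by simp
qed

lemma abs_powr_diff_le:
  fixes x y p :: real
  assumes "0 < p" "p \<le> 1"
  shows "\<bar>\<bar>x\<bar> powr p - \<bar>y\<bar> powr p\<bar> \<le> \<bar>x - y\<bar> powr p"
proof -
  have "\<bar>x\<bar> powr p \<le> \<bar>y\<bar> powr p + \<bar>x - y\<bar> powr p" for x y :: real
  proof -
    have "\<bar>x\<bar> powr p \<le> (\<bar>y\<bar> + \<bar>x - y\<bar>) powr p" by (rule powr_mono2) (use assms in auto)
    also have "\<dots> \<le> \<bar>y\<bar> powr p + \<bar>x - y\<bar> powr p" by (rule powr_add_le) (use assms in auto)
    finally show ?thesis .
  qed
  from this[of x y] this[of y x] show ?thesis by (simp add: abs_minus_commute abs_le_iff)
qed

lemma abs_powr_le_sq: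
  fixes x p \<eta> :: real
  assumes "0 < p" "p < 2" "\<eta> > 0"
  shows "\<bar>x\<bar> powr p \<le> \<eta> powr p + \<eta> powr (p - 2) * x\<^sup>2"
proof (cases "\<bar>x\<bar> \<le> \<eta>")
  case True
  then have "\<bar>x\<bar> powr p \<le> \<eta> powr p" using assms by (intro powr_mono2) auto
  then show ?thesis by (simp add: add_increasing2)
next
  case False
  then have "\<bar>x\<bar> powr p = \<bar>x\<bar> powr (p - 2) * x\<^sup>2"
    using assms by (simp add: powr_diff powr_realpow[symmetric])
  also have "\<dots> \<le> \<eta> powr (p - 2) * x\<^sup>2"
    using False assms by (intro mult_right_mono powr_mono2') auto
  finally show ?thesis by (simp add: add_increasing)
qed

lemma sq_powr_half:
  assumes "(e::real) > 0"
  shows "(e\<^sup>2) powr (a / 2) = e powr a"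
proof -
  have "e\<^sup>2 = e powr 2" using assms by (simp add: powr_realpow)
  then show ?thesis by (simp add: powr_powr)
qed

lemma sq_powr_half_abs: "(x\<^sup>2) powr (a / 2) = \<bar>x::real\<bar> powr a"
  by (cases "x = 0") (use sq_powr_half[of "\<bar>x\<bar>" a] in auto)

definition powr_tangent :: "real \<Rightarrow> real \<Rightarrow> real \<Rightarrow> real" where
  "powr_tangent q c s = q * c powr (q - 1) * s + (1 - q) * c powr q"

lemma powr_tangent_eq:
  assumes "c > 0"
  shows "powr_tangent q c s = c powr q + q * c powr (q - 1) * (s - c)"
proof -
  have "c powr (q - 1) * c = c powr q" using assms by (simp add: powr_diff)
  then show ?thesis unfolding powr_tangent_def by (simp add: algebra_simps)
qed

lemma powr_le_powr_tangent:
  assumes "0 < q" "q < 1" "c > 0" "s \<ge> 0"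
  shows "s powr q \<le> powr_tangent q c s"
proof (cases "s = 0")
  case True
  then show ?thesis using assms by (simp add: powr_tangent_def)
next
  case False
  have "(c powr (q - 1) * s) powr q * (c powr q) powr (1 - q) = c powr ((q - 1) * q + q * (1 - q)) * s powr q"
    using assms False by (simp add: powr_mult powr_powr powr_add)
  also have "\<dots> = s powr q" using assms by (simp add: algebra_simps)
  finally have "s powr q = (c powr (q - 1) * s) powr q * (c powr q) powr (1 - q)" by simp
  also have "\<dots> \<le> q * (c powr (q - 1) * s) + (1 - q) * c powr q"
    by (rule Youngs_inequality_0) (use assms False in auto)
  finally show ?thesis by (simp add: powr_tangent_def mult.assoc)
qed

lemma powr_tangent_mono:
  assumes "0 < q" "q < 1" "0 < c1" "c1 \<le> c2" "s \<le> c1"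
  shows "powr_tangent q c1 s \<le> powr_tangent q c2 s"
proof -
  have "c2 powr (q - 1) \<le> c1 powr (q - 1)"
    by (rule powr_mono2') (use assms in auto)
  then have "0 \<le> q * (c1 powr (q - 1) - c2 powr (q - 1)) * (c1 - s)"
    using assms by auto
  moreover have "c1 powr q \<le> powr_tangent q c2 c1"
    by (rule powr_le_powr_tangent) (use assms in auto)
  ultimately show ?thesis
    using assms by (simp add: powr_tangent_eq algebra_simps)
qed

lemma powr_tendsto_zero:
  fixes e :: "nat \<Rightarrow> real"
  assumes "\<And>n. e n > 0" "e \<longlonglongrightarrow> 0" "p > 0"
  shows "(\<lambda>n. e n powr p) \<longlonglongrightarrow> 0"
  by (rule tendsto_zero_powrI[OF assms(2) tendsto_const]) (use assms in \<open>simp_all add: always_eventually less_imp_le\<close>)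

lemma tendsto_approx:
  fixes x y z :: "nat \<Rightarrow> real"
  assumes "y \<longlonglongrightarrow> L" "\<And>n. \<bar>x n - y n\<bar> \<le> z n" "z \<longlonglongrightarrow> 0"
  shows "x \<longlonglongrightarrow> L"
proof -
  have "(\<lambda>n. x n - y n) \<longlonglongrightarrow> 0"
    using assms(2) by (intro Lim_null_comparison[OF _ assms(3)] always_eventually) simp
  from tendsto_add[OF this assms(1)] show ?thesis by simp
qed

lemma subseq_null_subseq_imp_tendsto_zero:
  fixes s :: "nat \<Rightarrow> real"
  assumes "\<And>r :: nat \<Rightarrow> nat. strict_mono r \<Longrightarrow> \<exists>r' :: nat \<Rightarrow> nat. strict_mono r' \<and> (\<lambda>j. s (r (r' j))) \<longlonglongrightarrow> 0"
  shows "s \<longlonglongrightarrow> 0"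
proof (rule ccontr)
  assume "\<not> s \<longlonglongrightarrow> 0"
  then obtain \<delta> where \<delta>: "\<delta> > 0" "\<forall>N. \<exists>n\<ge>N. \<delta> \<le> \<bar>s n\<bar>"
    unfolding LIMSEQ_def dist_real_def by (auto simp: not_less)
  define A where "A = {n. \<delta> \<le> \<bar>s n\<bar>}"
  have "infinite A"
    unfolding infinite_nat_iff_unbounded_le A_def using \<delta>(2) by auto
  define r where "r = enumerate A"
  have r: "strict_mono r" "\<And>j. \<delta> \<le> \<bar>s (r j)\<bar>"
    using \<open>infinite A\<close> enumerate_in_set[OF \<open>infinite A\<close>]
    by (auto simp: r_def strict_mono_enumerate A_def)
  obtain r' where "(\<lambda>j. s (r (r' j))) \<longlonglongrightarrow> 0"
    using assms[OF r(1)] by blast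
  then have "eventually (\<lambda>j. \<bar>s (r (r' j))\<bar> < \<delta>) sequentially"
    using \<delta>(1) by (auto simp: LIMSEQ_def dist_real_def eventually_sequentially)
  then obtain j where "\<bar>s (r (r' j))\<bar> < \<delta>" by (auto dest: eventually_happens)
  then show False using r(2)[of "r' j"] by simp
qed

lemma Cauchy_if_sq_dist_le:
  fixes xs :: "nat \<Rightarrow> 'a::real_normed_vector"
  assumes dist: "\<And>m n. (norm (xs m - xs n))\<^sup>2 \<le> b m + b n" and b: "b \<longlonglongrightarrow> 0"
  shows "Cauchy xs"
proof (rule CauchyI)
  fix e :: real assume "e > 0"
  then obtain N where N: "\<And>n. n \<ge> N \<Longrightarrow> b n < e\<^sup>2 / 2"
    using order_tendstoD(2)[OF b, of "e\<^sup>2 / 2"] by (auto simp: eventually_sequentially)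
  have "norm (xs m - xs n) < e" if "m \<ge> N" "n \<ge> N" for m n
  proof (rule power_less_imp_less_base)
    show "(norm (xs m - xs n))\<^sup>2 < e\<^sup>2"
      using dist[of m n] N[OF that(1)] N[OF that(2)] by simp
  qed (use \<open>e > 0\<close> in simp)
  then show "\<exists>N. \<forall>m\<ge>N. \<forall>n\<ge>N. norm (xs m - xs n) < e" by blast
qed

section \<open>The smoothed power function\<close>

lemma psi_eq_powr_tangent:
  assumes "e > 0"
  shows "psi p e t = (if t < e\<^sup>2 then powr_tangent (p/2) (e\<^sup>2) t else t powr (p/2))"
proof -
  have "(e\<^sup>2) powr (p/2 - 1) = e powr (p - 2)"
    using sq_powr_half[OF assms, of "p - 2"] by (simp add: diff_divide_distrib)
  moreover have "p / 2 * t / e powr (2 - p) = p / 2 * e powr (p - 2) * t"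
    using assms by (simp add: powr_diff field_simps)
  ultimately show ?thesis
    using assms by (simp add: psi_def powr_tangent_def sq_powr_half)
qed

lemma dpsi_eq:
  assumes "e > 0"
  shows "dpsi p e t = (if t < e\<^sup>2 then p/2 * (e\<^sup>2) powr (p/2 - 1) else p/2 * t powr (p/2 - 1))"
proof -
  have "(e\<^sup>2) powr (p/2 - 1) = e powr (p - 2)"
    using sq_powr_half[OF assms, of "p - 2"] by (simp add: diff_divide_distrib)
  then show ?thesis by (simp add: dpsi_def diff_divide_distrib)
qed

lemma psi_measurable[measurable]: "psi p e \<in> borel_measurable borel"
  unfolding psi_def by measurable

lemma dpsi_measurable[measurable]: "dpsi p e \<in> borel_measurable borel"
  unfolding dpsi_def by measurable

lemma psi_below_tangent:
  assumes "0 < p" "p < 1" "e > 0" "s \<ge> 0" "t \<ge> 0"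
  shows "psi p e s \<le> psi p e t + dpsi p e t * (s - t)"
proof -
  define c where "c = e\<^sup>2"
  have c: "c > 0" using assms by (simp add: c_def)
  note P = psi_eq_powr_tangent[OF assms(3), of p, folded c_def]
  note D = dpsi_eq[OF assms(3), of p, folded c_def]
  have psi_le: "psi p e s \<le> powr_tangent (p/2) c' s" if "c \<le> c'" for c'
  proof (cases "s < c")
    case True
    then show ?thesis using P powr_tangent_mono[of "p/2" c c' s] assms c that by simp
  next
    case False
    then show ?thesis using P powr_le_powr_tangent[of "p/2" c' s] assms c that by simp
  qed
  show ?thesis
  proof (cases "t < c")
    case True
    then have "psi p e t + dpsi p e t * (s - t) = powr_tangent (p/2) c s"
      using P D by (simp add: powr_tangent_def field_simps)
    then show ?thesis using psi_le[of c] by simp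
  next
    case False
    then have "psi p e t + dpsi p e t * (s - t) = powr_tangent (p/2) t s"
      using P D c by (simp add: powr_tangent_eq)
    then show ?thesis using psi_le[of t] False by simp
  qed
qed

lemma psi_mono_eps:
  assumes "0 < p" "p < 1" "0 < e1" "e1 \<le> e2" "t \<ge> 0"
  shows "psi p e1 t \<le> psi p e2 t"
proof -
  have c: "e1\<^sup>2 \<le> e2\<^sup>2" using assms by (simp add: power_mono)
  consider "t < e1\<^sup>2" | "e1\<^sup>2 \<le> t" "t < e2\<^sup>2" | "e2\<^sup>2 \<le> t" by linarith
  then show ?thesis
  proof cases
    case 1
    moreover have "t < e2\<^sup>2" using 1 c by linarith
    ultimately have "psi p e1 t = powr_tangent (p/2) (e1\<^sup>2) t" "psi p e2 t = powr_tangent (p/2) (e2\<^sup>2) t"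
      using assms by (simp_all add: psi_eq_powr_tangent)
    then show ?thesis using 1 c assms powr_tangent_mono[of "p/2" "e1\<^sup>2" "e2\<^sup>2" t] by simp
  next
    case 2
    then show ?thesis
      using assms powr_le_powr_tangent[of "p/2" "e2\<^sup>2" t] by (simp add: psi_eq_powr_tangent)
  next
    case 3
    moreover have "\<not> t < e1\<^sup>2" using 3 c by linarith
    ultimately show ?thesis using assms by (simp add: psi_eq_powr_tangent)
  qed
qed

lemma psi_nonneg: "0 < p \<Longrightarrow> p < 1 \<Longrightarrow> 0 < e \<Longrightarrow> t \<ge> 0 \<Longrightarrow> 0 \<le> psi p e t"
  by (simp add: psi_def)

lemma abs_psi_minus_powr_le:
  assumes "0 < p" "p < 1" "0 < e" "t \<ge> 0"
  shows "\<bar>psi p e t - t powr (p/2)\<bar> \<le> e powr p"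
proof (cases "t < e\<^sup>2")
  case True
  have "t powr (p/2) \<le> psi p e t"
    using True powr_le_powr_tangent[of "p/2" "e\<^sup>2" t] assms by (simp add: psi_eq_powr_tangent)
  moreover have "psi p e t \<le> powr_tangent (p/2) (e\<^sup>2) (e\<^sup>2)"
    using True assms by (simp add: psi_eq_powr_tangent powr_tangent_def)
  moreover have "powr_tangent (p/2) (e\<^sup>2) (e\<^sup>2) = e powr p"
    using assms by (simp add: powr_tangent_eq sq_powr_half)
  moreover have "0 \<le> t powr (p/2)" by simp
  ultimately show ?thesis by linarith
next
  case False
  then show ?thesis using assms by (simp add: psi_def)
qed

lemma psi_le_affine:
  assumes "0 < p" "p < 1" "0 < e" "t \<ge> 0"
  shows "psi p e t \<le> e powr p + 1 + t"
proof -
  have "t powr (p/2) \<le> 1 + t"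
  proof (cases "t \<le> 1")
    case True
    then have "t powr (p/2) \<le> 1 powr (p/2)" using assms by (intro powr_mono2) auto
    then show ?thesis using assms by simp
  next
    case False
    then have "t powr (p/2) \<le> t powr 1" using assms by (intro powr_mono) auto
    then show ?thesis using False by simp
  qed
  then show ?thesis using abs_psi_minus_powr_le[OF assms] by linarith
qed

lemma dpsi_nonneg: "0 < e \<Longrightarrow> 0 \<le> p \<Longrightarrow> 0 \<le> dpsi p e t"
  by (simp add: dpsi_def)

lemma dpsi_le:
  assumes "0 < p" "p < 1" "0 < e" "t \<ge> 0"
  shows "dpsi p e t \<le> p/2 * e powr (p - 2)"
proof (cases "t < e\<^sup>2")
  case True
  then show ?thesis by (simp add: dpsi_def)
next
  case False
  have "t powr ((p - 2) / 2) \<le> (e\<^sup>2) powr ((p - 2) / 2)"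
    by (rule powr_mono2') (use assms False in auto)
  then show ?thesis using False assms by (simp add: dpsi_def sq_powr_half)
qed

lemma abs_dpsi_mult_minus_powr_le:
  assumes "0 < p" "p < 1" "0 < e" "t \<ge> 0"
  shows "\<bar>2 * dpsi p e t * t - p * t powr (p/2)\<bar> \<le> p * e powr p"
proof (cases "t < e\<^sup>2")
  case True
  have "e powr (p - 2) * t \<le> e powr (p - 2) * e\<^sup>2"
    using True by (intro mult_left_mono) auto
  also have "\<dots> = e powr p"
    using assms by (simp add: powr_diff powr_realpow)
  finally have "e powr (p - 2) * t \<le> e powr p" .
  moreover have "t powr (p/2) \<le> e powr p"
    using True assms powr_mono2[of "p/2" t "e\<^sup>2"] by (simp add: sq_powr_half)
  moreover have "0 \<le> e powr (p - 2) * t" "0 \<le> t powr (p/2)" using assms by simp_all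
  ultimately have "\<bar>e powr (p - 2) * t - t powr (p/2)\<bar> \<le> e powr p" by linarith
  moreover have "2 * dpsi p e t * t - p * t powr (p/2) = p * (e powr (p - 2) * t - t powr (p/2))"
    using True by (simp add: dpsi_def algebra_simps)
  ultimately show ?thesis
    using assms by (simp add: abs_mult)
next
  case False
  then have "t > 0" using assms by (metis not_le order.strict_trans2 zero_less_power2 less_eq_real_def)
  then have "t powr ((p - 2) / 2) * t = t powr (p/2)"
    by (simp add: powr_diff diff_divide_distrib)
  then show ?thesis using False assms by (simp add: dpsi_def mult.assoc)
qed

section \<open>Square-integrable functions\<close>

definition square_integrable :: "'a measure \<Rightarrow> ('a \<Rightarrow> real) \<Rightarrow> bool" where
  "square_integrable M f \<longleftrightarrow> f \<in> borel_measurable M \<and> integrable M (\<lambda>x. (f x)\<^sup>2)"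

lemma square_integrable_mult_integrable:
  assumes "square_integrable M f" "square_integrable M g"
  shows "integrable M (\<lambda>x. f x * g x)"
proof (rule Bochner_Integration.integrable_bound)
  show "integrable M (\<lambda>x. (f x)\<^sup>2 + (g x)\<^sup>2)" using assms by (auto simp: square_integrable_def)
  show "(\<lambda>x. f x * g x) \<in> borel_measurable M" using assms by (auto simp: square_integrable_def)
  have "\<bar>f x\<bar> * \<bar>g x\<bar> \<le> (f x)\<^sup>2 + (g x)\<^sup>2" for x
  proof -
    have "2 * \<bar>f x\<bar> * \<bar>g x\<bar> \<le> (f x)\<^sup>2 + (g x)\<^sup>2"
      using sum_squares_bound[of "\<bar>f x\<bar>" "\<bar>g x\<bar>"] by (simp add: power2_eq_square)
    moreover have "0 \<le> \<bar>f x\<bar> * \<bar>g x\<bar>" by simp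
    ultimately show ?thesis by linarith
  qed
  then show "AE x in M. norm (f x * g x) \<le> norm ((f x)\<^sup>2 + (g x)\<^sup>2)"
    by (simp add: abs_mult)
qed

lemma square_integrable_add:
  "square_integrable M f \<Longrightarrow> square_integrable M g \<Longrightarrow> square_integrable M (\<lambda>x. f x + g x)"
  using square_integrable_mult_integrable[of M f g]
  by (auto simp: square_integrable_def power2_sum mult.assoc)

lemma square_integrable_cmult: "square_integrable M f \<Longrightarrow> square_integrable M (\<lambda>x. c * f x)"
  by (auto simp: square_integrable_def power_mult_distrib)

lemma square_integrable_diff:
  "square_integrable M f \<Longrightarrow> square_integrable M g \<Longrightarrow> square_integrable M (\<lambda>x. f x - g x)"
  using square_integrable_add[of M f "\<lambda>x. (-1) * g x"] square_integrable_cmult[of M g "-1"] by simp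

lemma integral_Cauchy_Schwarz:
  assumes f: "square_integrable M f" and g: "square_integrable M g"
  shows "\<bar>\<integral>x. f x * g x \<partial>M\<bar> \<le> sqrt (\<integral>x. (f x)\<^sup>2 \<partial>M) * sqrt (\<integral>x. (g x)\<^sup>2 \<partial>M)"
proof -
  have "0 \<le> (\<integral>x. (f x)\<^sup>2 \<partial>M) + 2 * (\<integral>x. f x * g x \<partial>M) * t + (\<integral>x. (g x)\<^sup>2 \<partial>M) * t\<^sup>2" for t
  proof -
    have "0 \<le> (\<integral>x. (f x + t * g x)\<^sup>2 \<partial>M)" by simp
    also have "(\<integral>x. (f x + t * g x)\<^sup>2 \<partial>M) = (\<integral>x. (f x)\<^sup>2 + (2 * t) * (f x * g x) + t\<^sup>2 * (g x)\<^sup>2 \<partial>M)"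
      by (simp add: power2_sum power_mult_distrib algebra_simps)
    also have "\<dots> = (\<integral>x. (f x)\<^sup>2 \<partial>M) + 2 * (\<integral>x. f x * g x \<partial>M) * t + (\<integral>x. (g x)\<^sup>2 \<partial>M) * t\<^sup>2"
      using f g square_integrable_mult_integrable[OF f g] by (simp add: square_integrable_def)
    finally show ?thesis .
  qed
  then have "(\<integral>x. f x * g x \<partial>M)\<^sup>2 \<le> (\<integral>x. (f x)\<^sup>2 \<partial>M) * (\<integral>x. (g x)\<^sup>2 \<partial>M)"
    by (rule quadratic_nonneg_imp_discriminant_le)
  then have "sqrt ((\<integral>x. f x * g x \<partial>M)\<^sup>2) \<le> sqrt ((\<integral>x. (f x)\<^sup>2 \<partial>M) * (\<integral>x. (g x)\<^sup>2 \<partial>M))"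
    by (rule real_sqrt_le_mono)
  then show ?thesis by (simp add: real_sqrt_mult)
qed

lemma integral_sq_le_two_mult:
  assumes "square_integrable M f" "square_integrable M g"
  shows "(\<integral>x. (f x)\<^sup>2 \<partial>M) \<le> 2 * (\<integral>x. (g x)\<^sup>2 \<partial>M) + 2 * (\<integral>x. (f x - g x)\<^sup>2 \<partial>M)"
proof -
  have "(\<integral>x. (f x)\<^sup>2 \<partial>M) \<le> (\<integral>x. 2 * (g x)\<^sup>2 + 2 * (f x - g x)\<^sup>2 \<partial>M)"
  proof (rule integral_mono)
    show "integrable M (\<lambda>x. (f x)\<^sup>2)"
      using assms by (simp add: square_integrable_def)
    show "integrable M (\<lambda>x. 2 * (g x)\<^sup>2 + 2 * (f x - g x)\<^sup>2)"
      using assms square_integrable_diff[OF assms] by (simp add: square_integrable_def)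
    have "0 \<le> (f x - 2 * g x)\<^sup>2" for x by simp
    then show "(f x)\<^sup>2 \<le> 2 * (g x)\<^sup>2 + 2 * (f x - g x)\<^sup>2" for x
      by (simp add: power2_eq_square algebra_simps)
  qed
  also have "\<dots> = 2 * (\<integral>x. (g x)\<^sup>2 \<partial>M) + 2 * (\<integral>x. (f x - g x)\<^sup>2 \<partial>M)"
    using assms square_integrable_diff[OF assms] by (simp add: square_integrable_def)
  finally show ?thesis .
qed

lemma integrable_bounded_mult:
  fixes g h :: "'a \<Rightarrow> real"
  assumes "integrable M h" "g \<in> borel_measurable M" "\<And>x. \<bar>g x\<bar> \<le> K"
  shows "integrable M (\<lambda>x. g x * h x)"
proof (rule Bochner_Integration.integrable_bound)
  show "integrable M (\<lambda>x. K * h x)" using assms by simp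
  show "(\<lambda>x. g x * h x) \<in> borel_measurable M" using assms by (simp add: borel_measurable_integrable)
  have "\<bar>g x\<bar> * \<bar>h x\<bar> \<le> K * \<bar>h x\<bar>" "0 \<le> K" for x
    using assms(3)[of x] by (auto intro: mult_right_mono)
  then show "AE x in M. norm (g x * h x) \<le> norm (K * h x)" by (simp add: abs_mult)
qed

context finite_measure
begin

lemma integrable_abs_powr:
  assumes "square_integrable M f" "0 < p" "p < 2"
  shows "integrable M (\<lambda>x. \<bar>f x\<bar> powr p)"
proof (rule Bochner_Integration.integrable_bound)
  show "integrable M (\<lambda>x. 1 + (f x)\<^sup>2)" using assms by (simp add: square_integrable_def)
  show "(\<lambda>x. \<bar>f x\<bar> powr p) \<in> borel_measurable M" using assms by (auto simp: square_integrable_def)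
  show "AE x in M. norm (\<bar>f x\<bar> powr p) \<le> norm (1 + (f x)\<^sup>2)"
    using abs_powr_le_sq[of p 1] assms by simp
qed

lemma abs_integral_abs_powr_diff_le:
  assumes f: "square_integrable M f" and w: "square_integrable M w"
    and p: "0 < p" "p \<le> 1" and \<eta>: "\<eta> > 0"
  shows "\<bar>(\<integral>x. \<bar>f x\<bar> powr p \<partial>M) - (\<integral>x. \<bar>w x\<bar> powr p \<partial>M)\<bar>
    \<le> \<eta> powr p * measure M (space M) + \<eta> powr (p - 2) * (\<integral>x. (f x - w x)\<^sup>2 \<partial>M)"
proof -
  have fw: "square_integrable M (\<lambda>x. f x - w x)" by (rule square_integrable_diff[OF f w])
  have int: "integrable M (\<lambda>x. \<bar>f x\<bar> powr p)" "integrable M (\<lambda>x. \<bar>w x\<bar> powr p)"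
    using integrable_abs_powr[OF f] integrable_abs_powr[OF w] p by simp_all
  have "norm ((\<integral>x. \<bar>f x\<bar> powr p \<partial>M) - (\<integral>x. \<bar>w x\<bar> powr p \<partial>M))
      = norm (\<integral>x. \<bar>f x\<bar> powr p - \<bar>w x\<bar> powr p \<partial>M)"
    using int by simp
  also have "\<dots> \<le> (\<integral>x. norm (\<bar>f x\<bar> powr p - \<bar>w x\<bar> powr p) \<partial>M)"
    by (rule integral_norm_bound)
  also have "\<dots> \<le> (\<integral>x. \<eta> powr p + \<eta> powr (p - 2) * (f x - w x)\<^sup>2 \<partial>M)"
  proof (rule integral_mono)
    show "integrable M (\<lambda>x. norm (\<bar>f x\<bar> powr p - \<bar>w x\<bar> powr p))" using int by simp
    show "integrable M (\<lambda>x. \<eta> powr p + \<eta> powr (p - 2) * (f x - w x)\<^sup>2)"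
      using fw by (simp add: square_integrable_def)
    fix x
    have "\<bar>\<bar>f x\<bar> powr p - \<bar>w x\<bar> powr p\<bar> \<le> \<bar>f x - w x\<bar> powr p"
      by (rule abs_powr_diff_le[OF p])
    also have "\<dots> \<le> \<eta> powr p + \<eta> powr (p - 2) * (f x - w x)\<^sup>2"
      by (rule abs_powr_le_sq) (use p \<eta> in auto)
    finally show "norm (\<bar>f x\<bar> powr p - \<bar>w x\<bar> powr p) \<le> \<eta> powr p + \<eta> powr (p - 2) * (f x - w x)\<^sup>2"
      by simp
  qed
  also have "\<dots> = \<eta> powr p * measure M (space M) + \<eta> powr (p - 2) * (\<integral>x. (f x - w x)\<^sup>2 \<partial>M)"
    using fw by (simp add: square_integrable_def mult.commute)
  finally show ?thesis by simp
qed

lemma integral_abs_powr_tendsto: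
  assumes f: "\<And>n. square_integrable M (f n)" and w: "square_integrable M w"
    and p: "0 < p" "p \<le> 1"
    and L2: "(\<lambda>n. \<integral>x. (f n x - w x)\<^sup>2 \<partial>M) \<longlonglongrightarrow> 0"
  shows "(\<lambda>n. \<integral>x. \<bar>f n x\<bar> powr p \<partial>M) \<longlonglongrightarrow> (\<integral>x. \<bar>w x\<bar> powr p \<partial>M)"
proof (rule LIMSEQ_I)
  fix \<delta> :: real assume \<delta>: "\<delta> > 0"
  define \<mu> where "\<mu> = measure M (space M)"
  define \<eta> where "\<eta> = (\<delta> / (2 * (\<mu> + 1))) powr (1 / p)"
  define K where "K = \<eta> powr (p - 2)"
  have \<mu>: "\<mu> \<ge> 0" by (simp add: \<mu>_def)
  then have \<eta>: "\<eta> > 0" using \<delta> by (simp add: \<eta>_def)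
  have "\<eta> powr p * \<mu> = \<delta> * \<mu> / (2 * (\<mu> + 1))"
    using \<delta> \<mu> p by (simp add: \<eta>_def powr_powr)
  also have "\<dots> < \<delta> / 2" using \<delta> \<mu> by (simp add: field_simps)
  finally have \<eta>\<mu>: "\<eta> powr p * \<mu> < \<delta> / 2" .
  have K: "K > 0" using \<eta> by (simp add: K_def)
  have "eventually (\<lambda>n. (\<integral>x. (f n x - w x)\<^sup>2 \<partial>M) < \<delta> / (2 * K)) sequentially"
    using \<delta> K by (intro order_tendstoD[OF L2] divide_pos_pos) simp_all
  then obtain n0 where n0: "\<And>n. n \<ge> n0 \<Longrightarrow> (\<integral>x. (f n x - w x)\<^sup>2 \<partial>M) < \<delta> / (2 * K)"
    unfolding eventually_sequentially by blast
  have "norm ((\<integral>x. \<bar>f n x\<bar> powr p \<partial>M) - (\<integral>x. \<bar>w x\<bar> powr p \<partial>M)) < \<delta>" if "n \<ge> n0" for n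
  proof -
    have "K * (\<integral>x. (f n x - w x)\<^sup>2 \<partial>M) < K * (\<delta> / (2 * K))"
      using n0[OF that] K by (rule mult_strict_left_mono)
    moreover have "\<bar>(\<integral>x. \<bar>f n x\<bar> powr p \<partial>M) - (\<integral>x. \<bar>w x\<bar> powr p \<partial>M)\<bar>
        \<le> \<eta> powr p * \<mu> + K * (\<integral>x. (f n x - w x)\<^sup>2 \<partial>M)"
      using abs_integral_abs_powr_diff_le[OF f w p \<eta>] unfolding K_def \<mu>_def .
    ultimately show ?thesis using \<eta>\<mu> K by simp
  qed
  then show "\<exists>n0. \<forall>n\<ge>n0. norm ((\<integral>x. \<bar>f n x\<bar> powr p \<partial>M) - (\<integral>x. \<bar>w x\<bar> powr p \<partial>M)) < \<delta>"
    by blast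
qed

end

section \<open>Riesz representation\<close>

text \<open>Two almost-maximisers of a functional of norm \<open>S\<close> on the unit ball are close,
  by the parallelogram law: their midpoint is an almost-maximiser too, hence of norm close to \<open>1\<close>.\<close>
lemma almost_maximizers_close:
  fixes \<phi> :: "'v::real_inner \<Rightarrow> real"
  assumes \<phi>: "linear \<phi>" "\<And>z. \<bar>\<phi> z\<bar> \<le> S * norm z" and S: "S > 0"
    and x: "norm x \<le> 1" "S - d1 < \<phi> x" and y: "norm y \<le> 1" "S - d2 < \<phi> y"
  shows "(norm (x - y))\<^sup>2 \<le> 4 / S * (d1 + d2)"
proof -
  define d where "d = d1 + d2"
  have "(norm (x - y))\<^sup>2 + (norm (x + y))\<^sup>2 = 2 * (norm x)\<^sup>2 + 2 * (norm y)\<^sup>2"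
    unfolding power2_norm_eq_inner
    by (simp add: inner_diff_left inner_diff_right inner_add_left inner_add_right inner_commute)
  moreover have "(norm x)\<^sup>2 \<le> 1" "(norm y)\<^sup>2 \<le> 1"
    using x(1) y(1) by (auto simp: power_le_one)
  ultimately have le4: "(norm (x - y))\<^sup>2 \<le> 4 - (norm (x + y))\<^sup>2" by linarith
  show ?thesis
  proof (cases "d / S \<le> 2")
    case True
    have "2 * S - d < \<phi> (x + y)"
      using x(2) y(2) linear_add[OF \<phi>(1)] by (simp add: d_def)
    also have "\<dots> \<le> S * norm (x + y)" using \<phi>(2)[of "x + y"] by simp
    finally have "2 - d / S \<le> norm (x + y)" using S by (simp add: field_simps)
    then have "(2 - d / S)\<^sup>2 \<le> (norm (x + y))\<^sup>2" using True by (intro power_mono) auto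
    then have "(norm (x - y))\<^sup>2 \<le> 4 * (d / S) - (d / S)\<^sup>2"
      using le4 by (simp add: power2_eq_square algebra_simps)
    also have "\<dots> \<le> 4 / S * d" by simp
    finally show ?thesis by (simp add: d_def)
  next
    case False
    moreover have "4 / S * d = 4 * (d / S)" by simp
    ultimately show ?thesis using le4 zero_le_power2[of "norm (x + y)"] unfolding d_def by linarith
  qed
qed

lemma linear_functional_attains_bound:
  fixes \<phi> :: "'v::{real_inner,complete_space} \<Rightarrow> real"
  assumes \<phi>: "linear \<phi>" "\<And>z. \<bar>\<phi> z\<bar> \<le> S * norm z" and S: "S > 0"
    and almost: "\<And>\<delta>. \<delta> > 0 \<Longrightarrow> \<exists>x. norm x \<le> 1 \<and> S - \<delta> < \<phi> x"
  obtains x0 where "norm x0 \<le> 1" "\<phi> x0 = S"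
proof -
  have "\<forall>n. \<exists>x. norm x \<le> 1 \<and> S - 1 / real (Suc n) < \<phi> x"
    using almost by simp
  then have "\<exists>xs. \<forall>n. norm (xs n) \<le> 1 \<and> S - 1 / real (Suc n) < \<phi> (xs n)"
    by (rule choice)
  then obtain xs where xs: "\<And>n. norm (xs n) \<le> 1" "\<And>n. S - 1 / real (Suc n) < \<phi> (xs n)"
    by blast
  have "Cauchy xs"
  proof (rule Cauchy_if_sq_dist_le)
    show "(norm (xs m - xs n))\<^sup>2 \<le> 4 / S * (1 / real (Suc m)) + 4 / S * (1 / real (Suc n))" for m n
      using almost_maximizers_close[OF \<phi> S xs(1,2) xs(1,2)] by (simp add: distrib_left)
    show "(\<lambda>n. 4 / S * (1 / real (Suc n))) \<longlonglongrightarrow> 0"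
      by (intro tendsto_mult_right_zero LIMSEQ_inverse_real_of_nat[unfolded inverse_eq_divide])
  qed
  then obtain x0 where lim: "xs \<longlonglongrightarrow> x0"
    using Cauchy_convergent_iff convergent_def by blast
  have "bounded_linear \<phi>"
    using \<phi> by (intro bounded_linear_intro[where K = S]) (auto simp: linear_add linear_scale mult.commute)
  then have "(\<lambda>n. \<phi> (xs n)) \<longlonglongrightarrow> \<phi> x0" by (rule bounded_linear.tendsto[OF _ lim])
  moreover have "(\<lambda>n. S - 1 / real (Suc n)) \<longlonglongrightarrow> S"
    using tendsto_diff[OF tendsto_const LIMSEQ_inverse_real_of_nat[unfolded inverse_eq_divide], of S]
    by simp
  moreover have "\<forall>\<^sub>F n in sequentially. S - 1 / real (Suc n) \<le> \<phi> (xs n)"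
    using xs(2) by (intro always_eventually allI less_imp_le)
  ultimately have "S \<le> \<phi> x0" by (rule tendsto_le[OF trivial_limit_sequentially])
  moreover have x0: "norm x0 \<le> 1"
    using xs(1) by (intro tendsto_upperbound[OF tendsto_norm[OF lim]]) auto
  moreover have "\<phi> x0 \<le> S * norm x0" using \<phi>(2)[of x0] by simp
  moreover have "S * norm x0 \<le> S" using x0 S by (simp add: mult_left_le)
  ultimately show ?thesis using that by simp
qed

lemma norm_attaining_functional_eq_inner:
  fixes \<phi> :: "'v::real_inner \<Rightarrow> real"
  assumes \<phi>: "linear \<phi>" "\<And>z. \<bar>\<phi> z\<bar> \<le> S * norm z" and S: "S > 0"
    and x0: "norm x0 \<le> 1" "\<phi> x0 = S"
  shows "\<phi> v = inner v (S *\<^sub>R x0)"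
proof -
  have "S \<le> S * norm x0" using \<phi>(2)[of x0] x0(2) by simp
  then have n1: "norm x0 = 1" using S x0(1) by simp
  have "0 \<le> 0 + 2 * (S\<^sup>2 * inner x0 v - S * \<phi> v) * t + (S\<^sup>2 * (norm v)\<^sup>2 - (\<phi> v)\<^sup>2) * t\<^sup>2" for t
  proof -
    have "\<phi> (x0 + t *\<^sub>R v) = S + t * \<phi> v"
      using x0(2) linear_add[OF \<phi>(1)] linear_scale[OF \<phi>(1)] by simp
    then have "\<bar>S + t * \<phi> v\<bar> \<le> S * norm (x0 + t *\<^sub>R v)" using \<phi>(2) by metis
    then have "(S + t * \<phi> v)\<^sup>2 \<le> S\<^sup>2 * (norm (x0 + t *\<^sub>R v))\<^sup>2"
      using S by (metis abs_le_square_iff abs_of_nonneg norm_ge_zero less_imp_le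
          mult_nonneg_nonneg power_mult_distrib)
    also have "(norm (x0 + t *\<^sub>R v))\<^sup>2 = 1 + 2 * t * inner x0 v + t\<^sup>2 * (norm v)\<^sup>2"
      using n1 norm_eq_1[of x0] unfolding power2_norm_eq_inner
      by (simp add: inner_add_left inner_add_right inner_commute power2_eq_square algebra_simps)
    finally show ?thesis by (simp add: power2_eq_square algebra_simps)
  qed
  then have "(S\<^sup>2 * inner x0 v - S * \<phi> v)\<^sup>2 \<le> 0"
    using quadratic_nonneg_imp_discriminant_le by fastforce
  then have "S\<^sup>2 * inner x0 v - S * \<phi> v = 0" by simp
  then have "S * (S * inner x0 v - \<phi> v) = 0" by (simp add: power2_eq_square algebra_simps)
  then show ?thesis using S by (simp add: inner_commute)
qed

lemma bounded_linear_unit_ball_Sup: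
  fixes \<phi> :: "'v::real_normed_vector \<Rightarrow> real"
  assumes "bounded_linear \<phi>"
  defines "S \<equiv> Sup (\<phi> ` {x. norm x \<le> 1})"
  shows "0 \<le> S" and "\<And>z. \<bar>\<phi> z\<bar> \<le> S * norm z"
    and "\<And>\<delta>. \<delta> > 0 \<Longrightarrow> \<exists>x. norm x \<le> 1 \<and> S - \<delta> < \<phi> x"
proof -
  interpret bounded_linear \<phi> by fact
  define B where "B = {x :: 'v. norm x \<le> 1}"
  obtain K where K: "K > 0" "\<And>x. norm (\<phi> x) \<le> norm x * K" using pos_bounded by blast
  have bdd: "bdd_above (\<phi> ` B)"
  proof (rule bdd_aboveI2)
    fix x assume "x \<in> B"
    then have "norm x * K \<le> K" using K(1) by (simp add: B_def mult_left_le_one_le)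
    then show "\<phi> x \<le> K" using K(2)[of x] by simp
  qed
  have upper: "\<phi> x \<le> S" if "norm x \<le> 1" for x
    unfolding S_def by (rule cSup_upper) (use that bdd B_def in auto)
  show "0 \<le> S" using upper[of 0] zero by simp
  show "\<bar>\<phi> z\<bar> \<le> S * norm z" for z
  proof (cases "z = 0")
    case True
    then show ?thesis by (simp add: zero)
  next
    case False
    have "norm (z /\<^sub>R norm z) \<le> 1" "norm (- (z /\<^sub>R norm z)) \<le> 1"
      using False by simp_all
    then have "\<phi> (z /\<^sub>R norm z) \<le> S" "\<phi> (- (z /\<^sub>R norm z)) \<le> S"
      by (simp_all only: upper)
    then show ?thesis using False by (simp add: scale neg abs_le_iff field_simps)
  qed
  show "\<exists>x. norm x \<le> 1 \<and> S - \<delta> < \<phi> x" if "\<delta> > 0" for \<delta>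
  proof -
    have "S - \<delta> < Sup (\<phi> ` B)" using that by (simp add: S_def B_def)
    moreover have "\<phi> ` B \<noteq> {}" using imageI[of 0 B \<phi>] by (auto simp: B_def)
    ultimately obtain y where "y \<in> \<phi> ` B" "S - \<delta> < y" by (rule less_cSupE)
    then show ?thesis by (auto simp: B_def)
  qed
qed

theorem Riesz_representation:
  fixes \<phi> :: "'v::{real_inner,complete_space} \<Rightarrow> real"
  assumes \<phi>: "bounded_linear \<phi>"
  shows "\<exists>y. \<forall>x. \<phi> x = inner x y"
proof -
  define S where "S = Sup (\<phi> ` {x. norm x \<le> 1})"
  note S = bounded_linear_unit_ball_Sup[OF \<phi>, folded S_def]
  have lin: "linear \<phi>" using \<phi> by (rule bounded_linear.linear)
  show ?thesis
  proof (cases "S = 0")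
    case True
    then show ?thesis using S(2) by (intro exI[of _ 0]) simp
  next
    case False
    with S(1) have "S > 0" by simp
    then obtain x0 where "norm x0 \<le> 1" "\<phi> x0 = S"
      using linear_functional_attains_bound[OF lin S(2)] S(3) by blast
    then show ?thesis
      using norm_attaining_functional_eq_inner[OF lin S(2) \<open>S > 0\<close>] by blast
  qed
qed

section \<open>The smoothed problem\<close>

locale Lp_regularization =
  fixes \<Omega> :: "'d::euclidean_space set" and \<iota> :: "'v::{real_inner,complete_space} \<Rightarrow> 'd \<Rightarrow> real"
    and F :: "'v \<Rightarrow> real" and F' :: "'v \<Rightarrow> 'v \<Rightarrow>\<^sub>L real" and \<alpha> \<beta> p :: real
  assumes \<Omega>: "\<Omega> \<in> lmeasurable"
    and emb: "compact_dense_L2_embedding \<Omega> \<iota>"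
    and \<alpha>: "\<alpha> > 0" and \<beta>: "\<beta> > 0" and p: "0 < p" "p < 1"
begin

abbreviation M :: "'d measure" where "M \<equiv> lebesgue_on \<Omega>"

abbreviation Q :: "real \<Rightarrow> 'v \<Rightarrow> real \<Rightarrow> 'v \<Rightarrow> real" where
  "Q \<equiv> Qmodel F F' \<alpha> \<beta> p \<Omega> \<iota>"

lemma finite_measure_M: "finite_measure M"
  by (rule finite_measure_lebesgue_on[OF \<Omega>])

lemma square_integrable_iota: "square_integrable M (\<iota> v)"
  using emb by (simp add: compact_dense_L2_embedding_def sq_int_def square_integrable_def)

lemma iota_measurable[measurable]: "\<iota> v \<in> borel_measurable M"
  using square_integrable_iota by (simp add: square_integrable_def)

lemma iota_linear_AE: "AE x in M. \<iota> (a *\<^sub>R v + b *\<^sub>R w) x = a * \<iota> v x + b * \<iota> w x"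
  using emb by (simp add: compact_dense_L2_embedding_def)

lemma iota_diff_AE: "AE x in M. \<iota> (v - w) x = \<iota> v x - \<iota> w x"
  using iota_linear_AE[of 1 v "-1" w] by simp

lemma iota_L2_bound: "\<exists>C\<ge>0. \<forall>v. (\<integral>x. (\<iota> v x)\<^sup>2 \<partial>M) \<le> C * (norm v)\<^sup>2"
proof -
  obtain C where C: "\<And>v. L2norm \<Omega> (\<iota> v) \<le> C * norm v"
    using emb by (auto simp: compact_dense_L2_embedding_def)
  have "(\<integral>x. (\<iota> v x)\<^sup>2 \<partial>M) \<le> C\<^sup>2 * (norm v)\<^sup>2" for v
  proof -
    have "sqrt (\<integral>x. (\<iota> v x)\<^sup>2 \<partial>M) \<le> C * norm v" using C[of v] by (simp add: L2norm_def)
    then have "(sqrt (\<integral>x. (\<iota> v x)\<^sup>2 \<partial>M))\<^sup>2 \<le> (C * norm v)\<^sup>2" by (intro power_mono) auto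
    then show ?thesis by (simp add: power_mult_distrib)
  qed
  then show ?thesis by (intro exI[of _ "C\<^sup>2"]) auto
qed

lemma iota_compact:
  fixes vs :: "nat \<Rightarrow> 'v"
  assumes "bounded (range vs)"
  obtains r g where "strict_mono r" "square_integrable M g"
    "(\<lambda>n. \<integral>x. (\<iota> (vs (r n)) x - g x)\<^sup>2 \<partial>M) \<longlonglongrightarrow> 0"
proof -
  have "\<forall>vs :: nat \<Rightarrow> 'v. bounded (range vs) \<longrightarrow> (\<exists>r g. strict_mono r \<and> sq_int \<Omega> g \<and>
      (\<lambda>n. L2norm \<Omega> (\<lambda>x. \<iota> (vs (r n)) x - g x)) \<longlonglongrightarrow> 0)"
    using emb unfolding compact_dense_L2_embedding_def by blast
  then obtain r :: "nat \<Rightarrow> nat" and g where r: "strict_mono r" "sq_int \<Omega> g"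
    and "(\<lambda>n. L2norm \<Omega> (\<lambda>x. \<iota> (vs (r n)) x - g x)) \<longlonglongrightarrow> 0"
    using assms by blast
  then have "(\<lambda>n. (L2norm \<Omega> (\<lambda>x. \<iota> (vs (r n)) x - g x))\<^sup>2) \<longlonglongrightarrow> 0"
    using tendsto_power[of _ 0 _ 2] by fastforce
  moreover have "(L2norm \<Omega> f)\<^sup>2 = (\<integral>x. (f x)\<^sup>2 \<partial>M)" for f
    by (simp add: L2norm_def integral_nonneg_AE)
  ultimately show ?thesis
    using that r by (simp add: sq_int_def square_integrable_def)
qed

definition psi_integral :: "real \<Rightarrow> 'v \<Rightarrow> real" where
  "psi_integral e v = (\<integral>x. psi p e ((\<iota> v x)\<^sup>2) \<partial>M)"

definition weighted_inner :: "real \<Rightarrow> 'v \<Rightarrow> 'v \<Rightarrow> 'v \<Rightarrow> real" where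
  "weighted_inner e w u v = (\<integral>x. dpsi p e ((\<iota> w x)\<^sup>2) * (\<iota> u x * \<iota> v x) \<partial>M)"

definition energy :: "real \<Rightarrow> 'v \<Rightarrow> real" where
  "energy e v = F v + \<alpha> / 2 * (norm v)\<^sup>2 + \<beta> * psi_integral e v"

lemma integrable_weighted_inner:
  assumes "e > 0"
  shows "integrable M (\<lambda>x. dpsi p e ((\<iota> w x)\<^sup>2) * (\<iota> u x * \<iota> v x))"
proof (rule integrable_bounded_mult)
  show "integrable M (\<lambda>x. \<iota> u x * \<iota> v x)"
    by (rule square_integrable_mult_integrable[OF square_integrable_iota square_integrable_iota])
  show "\<bar>dpsi p e ((\<iota> w x)\<^sup>2)\<bar> \<le> p/2 * e powr (p - 2)" for x
    using dpsi_le[OF p assms] dpsi_nonneg[OF assms] p by simp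
qed measurable

lemma integrable_psi_iota:
  assumes "e > 0"
  shows "integrable M (\<lambda>x. psi p e ((\<iota> v x)\<^sup>2))"
proof (rule Bochner_Integration.integrable_bound)
  interpret finite_measure M by (rule finite_measure_M)
  show "integrable M (\<lambda>x. e powr p + 1 + (\<iota> v x)\<^sup>2)"
    using square_integrable_iota by (simp add: square_integrable_def)
  show "AE x in M. norm (psi p e ((\<iota> v x)\<^sup>2)) \<le> norm (e powr p + 1 + (\<iota> v x)\<^sup>2)"
    using psi_le_affine[OF p assms] psi_nonneg[OF p assms] by (intro AE_I2) simp
qed measurable

lemma weighted_inner_self_nonneg: "e > 0 \<Longrightarrow> 0 \<le> weighted_inner e w v v"
  unfolding weighted_inner_def using dpsi_nonneg p by (intro integral_nonneg_AE AE_I2) auto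

lemma psi_integral_nonneg: "e > 0 \<Longrightarrow> 0 \<le> psi_integral e v"
  unfolding psi_integral_def using psi_nonneg[OF p] by (intro integral_nonneg_AE AE_I2) auto

lemma Q_eq:
  assumes "e > 0"
  shows "Q e uk L u = F uk + blinfun_apply (F' uk) (u - uk) + L / 2 * (norm (u - uk))\<^sup>2
     + \<alpha> / 2 * (norm u)\<^sup>2 + \<beta> * (psi_integral e uk + weighted_inner e uk u u - weighted_inner e uk uk uk)"
proof -
  have "(\<integral>x. psi p e ((\<iota> uk x)\<^sup>2) + dpsi p e ((\<iota> uk x)\<^sup>2) * ((\<iota> u x)\<^sup>2 - (\<iota> uk x)\<^sup>2) \<partial>M)
     = (\<integral>x. psi p e ((\<iota> uk x)\<^sup>2) + (dpsi p e ((\<iota> uk x)\<^sup>2) * (\<iota> u x * \<iota> u x)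
           - dpsi p e ((\<iota> uk x)\<^sup>2) * (\<iota> uk x * \<iota> uk x)) \<partial>M)"
    by (simp add: power2_eq_square algebra_simps)
  also have "\<dots> = psi_integral e uk + weighted_inner e uk u u - weighted_inner e uk uk uk"
    unfolding psi_integral_def weighted_inner_def
    using integrable_psi_iota[OF assms] integrable_weighted_inner[OF assms] by simp
  finally show ?thesis unfolding Qmodel_def by simp
qed

lemma Q_self: "e > 0 \<Longrightarrow> Q e uk L uk = energy e uk"
  by (simp add: Q_eq energy_def)

lemma weighted_inner_add_scale:
  assumes "e > 0"
  shows "weighted_inner e w (z + t *\<^sub>R v) (z + t *\<^sub>R v)
    = weighted_inner e w z z + 2 * t * weighted_inner e w z v + t\<^sup>2 * weighted_inner e w v v"
proof -
  have "weighted_inner e w (z + t *\<^sub>R v) (z + t *\<^sub>R v) =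
        (\<integral>x. dpsi p e ((\<iota> w x)\<^sup>2) * ((\<iota> z x + t * \<iota> v x) * (\<iota> z x + t * \<iota> v x)) \<partial>M)"
    unfolding weighted_inner_def
    by (rule integral_cong_AE) (use iota_linear_AE[of 1 z t v] in \<open>auto elim!: AE_mp\<close>)
  also have "\<dots> = (\<integral>x. dpsi p e ((\<iota> w x)\<^sup>2) * (\<iota> z x * \<iota> z x)
       + (2 * t) * (dpsi p e ((\<iota> w x)\<^sup>2) * (\<iota> z x * \<iota> v x))
       + t\<^sup>2 * (dpsi p e ((\<iota> w x)\<^sup>2) * (\<iota> v x * \<iota> v x)) \<partial>M)"
    by (simp add: power2_eq_square algebra_simps)
  also have "\<dots> = weighted_inner e w z z + 2 * t * weighted_inner e w z v + t\<^sup>2 * weighted_inner e w v v"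
    unfolding weighted_inner_def using integrable_weighted_inner[OF assms] by simp
  finally show ?thesis .
qed

lemma Q_along_line:
  assumes "e > 0"
  shows "Q e uk L (z + t *\<^sub>R w) - Q e uk L z
    = (blinfun_apply (F' uk) w + L * inner (z - uk) w + \<alpha> * inner z w + 2 * \<beta> * weighted_inner e uk z w) * t
      + ((L + \<alpha>) / 2 * (norm w)\<^sup>2 + \<beta> * weighted_inner e uk w w) * t\<^sup>2"
proof -
  have shift: "z + t *\<^sub>R w - uk = (z - uk) + t *\<^sub>R w" by simp
  have sq: "(norm (a + t *\<^sub>R w))\<^sup>2 = (norm a)\<^sup>2 + 2 * t * inner a w + t\<^sup>2 * (norm w)\<^sup>2" for a
    unfolding power2_norm_eq_inner
    by (simp add: inner_add_left inner_add_right inner_commute power2_eq_square algebra_simps)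
  have lin: "blinfun_apply (F' uk) (z + t *\<^sub>R w - uk) = blinfun_apply (F' uk) (z - uk) + t * blinfun_apply (F' uk) w"
    unfolding shift blinfun.add_right blinfun.scaleR_right by simp
  show ?thesis
    unfolding Q_eq[OF assms] weighted_inner_add_scale[OF assms] lin unfolding shift sq
    by (simp add: algebra_simps)
qed

text \<open>At a minimiser the linear term of \<open>Q\<close> along every line vanishes, so only the
  quadratic term, which is at least \<open>(L + \<alpha>)/2\<close> times the squared distance, remains.\<close>
lemma Q_minimizer_growth:
  assumes e: "e > 0" and min: "is_minimizer (Q e uk L) z"
  shows "Q e uk L (z + w) - Q e uk L z \<ge> (L + \<alpha>) / 2 * (norm w)\<^sup>2"
proof -
  define a where "a = blinfun_apply (F' uk) w + L * inner (z - uk) w + \<alpha> * inner z w + 2 * \<beta> * weighted_inner e uk z w"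
  define c where "c = (L + \<alpha>) / 2 * (norm w)\<^sup>2 + \<beta> * weighted_inner e uk w w"
  have "0 \<le> 0 + 2 * (a / 2) * t + c * t\<^sup>2" for t
  proof -
    have "0 \<le> Q e uk L (z + t *\<^sub>R w) - Q e uk L z"
      using min by (simp add: is_minimizer_def)
    also have "\<dots> = a * t + c * t\<^sup>2"
      using Q_along_line[OF e, of uk L z t w] unfolding a_def c_def by simp
    finally show ?thesis by simp
  qed
  then have "a = 0"
    using quadratic_nonneg_imp_discriminant_le[of 0 "a / 2" c] by simp
  then have "Q e uk L (z + w) - Q e uk L z = c"
    using Q_along_line[OF e, of uk L z 1 w] unfolding a_def c_def by simp
  then show ?thesis
    using weighted_inner_self_nonneg[OF e] \<beta> unfolding c_def by simp
qed

lemma psi_integral_le_linearization: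
  assumes e: "e > 0"
  shows "psi_integral e z \<le> psi_integral e w + weighted_inner e w z z - weighted_inner e w w w"
proof -
  have "psi_integral e z \<le> (\<integral>x. psi p e ((\<iota> w x)\<^sup>2) + dpsi p e ((\<iota> w x)\<^sup>2) * (\<iota> z x * \<iota> z x)
           - dpsi p e ((\<iota> w x)\<^sup>2) * (\<iota> w x * \<iota> w x) \<partial>M)"
    unfolding psi_integral_def
  proof (rule integral_mono)
    show "integrable M (\<lambda>x. psi p e ((\<iota> z x)\<^sup>2))" by (rule integrable_psi_iota[OF e])
    show "integrable M (\<lambda>x. psi p e ((\<iota> w x)\<^sup>2) + dpsi p e ((\<iota> w x)\<^sup>2) * (\<iota> z x * \<iota> z x)
           - dpsi p e ((\<iota> w x)\<^sup>2) * (\<iota> w x * \<iota> w x))"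
      using integrable_psi_iota[OF e] integrable_weighted_inner[OF e] by simp
    show "psi p e ((\<iota> z x)\<^sup>2) \<le> psi p e ((\<iota> w x)\<^sup>2) + dpsi p e ((\<iota> w x)\<^sup>2) * (\<iota> z x * \<iota> z x)
           - dpsi p e ((\<iota> w x)\<^sup>2) * (\<iota> w x * \<iota> w x)" for x
      using psi_below_tangent[OF p e, of "(\<iota> z x)\<^sup>2" "(\<iota> w x)\<^sup>2"]
      by (simp add: power2_eq_square algebra_simps)
  qed
  also have "\<dots> = psi_integral e w + weighted_inner e w z z - weighted_inner e w w w"
    unfolding psi_integral_def weighted_inner_def
    using integrable_psi_iota[OF e] integrable_weighted_inner[OF e] by simp
  finally show ?thesis .
qed

lemma energy_descent:
  assumes e: "e > 0" and min: "is_minimizer (Q e uk L) z" and dc: "descent_cond F F' uk L z"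
  shows "energy e z \<le> energy e uk - \<alpha> / 2 * (norm (z - uk))\<^sup>2"
proof -
  have "energy e z \<le> Q e uk L z + L / 2 * (norm (z - uk))\<^sup>2"
    using dc mult_left_mono[OF psi_integral_le_linearization[OF e, of z uk], of \<beta>] \<beta>
    by (simp add: Q_eq[OF e] energy_def descent_cond_def algebra_simps)
  also have "\<dots> \<le> energy e uk - \<alpha> / 2 * (norm (z - uk))\<^sup>2"
    using Q_minimizer_growth[OF e min, of "uk - z"] Q_self[OF e, of uk L]
    by (simp add: norm_minus_commute field_simps)
  finally show ?thesis .
qed

lemma energy_mono_eps:
  assumes "0 < e1" "e1 \<le> e2"
  shows "energy e1 v \<le> energy e2 v"
proof -
  have "psi_integral e1 v \<le> psi_integral e2 v"
    unfolding psi_integral_def using assms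
    by (intro integral_mono integrable_psi_iota psi_mono_eps[OF p]) auto
  then show ?thesis unfolding energy_def using \<beta> by simp
qed

lemma energy_lower_bound:
  assumes e: "e > 0" and lb: "\<And>v. F v \<ge> blinfun_apply l v + c"
  shows "energy e v \<ge> \<alpha> / 2 * (norm v)\<^sup>2 - norm l * norm v + c"
proof -
  have "- (norm l * norm v) \<le> blinfun_apply l v" using norm_blinfun[of l v] by simp
  then show ?thesis
    using lb[of v] psi_integral_nonneg[OF e, of v] \<beta> by (simp add: energy_def add_increasing2)
qed

lemma Q_minimizer_weighted_inner_le:
  assumes e: "e > 0" and min: "is_minimizer (Q e uk L) z" and L: "L \<ge> 0"
  shows "\<beta> * (weighted_inner e uk z z - weighted_inner e uk uk uk)
    \<le> - blinfun_apply (F' uk) (z - uk) - \<alpha> / 2 * ((norm z)\<^sup>2 - (norm uk)\<^sup>2)"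
proof -
  have "Q e uk L z \<le> Q e uk L uk"
    using min unfolding is_minimizer_def by blast
  moreover have "0 \<le> L / 2 * (norm (z - uk))\<^sup>2" using L by simp
  ultimately show ?thesis using e by (simp add: Q_eq algebra_simps)
qed

lemma iota_pairing_representation:
  assumes g: "square_integrable M g"
  shows "\<exists>y. \<forall>v. (\<integral>x. \<iota> v x * g x \<partial>M) = inner v y"
proof -
  obtain C where C: "C \<ge> 0" "\<And>v. (\<integral>x. (\<iota> v x)\<^sup>2 \<partial>M) \<le> C * (norm v)\<^sup>2"
    using iota_L2_bound by blast
  show ?thesis
  proof (rule Riesz_representation[OF bounded_linear_intro[where K = "sqrt C * sqrt (\<integral>x. (g x)\<^sup>2 \<partial>M)"]])
  have int: "integrable M (\<lambda>x. \<iota> v x * g x)" for v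
    by (rule square_integrable_mult_integrable[OF square_integrable_iota g])
  have g_meas: "g \<in> borel_measurable M" using g by (simp add: square_integrable_def)
  fix v w :: 'v and a :: real
  have "(\<integral>x. \<iota> (v + w) x * g x \<partial>M) = (\<integral>x. \<iota> v x * g x + \<iota> w x * g x \<partial>M)"
    using iota_linear_AE[of 1 v 1 w] g_meas
    by (intro integral_cong_AE) (auto elim!: AE_mp simp: algebra_simps)
  then show "(\<integral>x. \<iota> (v + w) x * g x \<partial>M) = (\<integral>x. \<iota> v x * g x \<partial>M) + (\<integral>x. \<iota> w x * g x \<partial>M)"
    using int by simp
  have "(\<integral>x. \<iota> (a *\<^sub>R v) x * g x \<partial>M) = (\<integral>x. a * (\<iota> v x * g x) \<partial>M)"
    using iota_linear_AE[of a v 0 v] g_meas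
    by (intro integral_cong_AE) (auto elim!: AE_mp simp: algebra_simps)
  then show "(\<integral>x. \<iota> (a *\<^sub>R v) x * g x \<partial>M) = a *\<^sub>R (\<integral>x. \<iota> v x * g x \<partial>M)" by simp
  have "\<bar>\<integral>x. \<iota> v x * g x \<partial>M\<bar> \<le> sqrt (\<integral>x. (\<iota> v x)\<^sup>2 \<partial>M) * sqrt (\<integral>x. (g x)\<^sup>2 \<partial>M)"
    by (rule integral_Cauchy_Schwarz[OF square_integrable_iota g])
  also have "\<dots> \<le> (sqrt C * norm v) * sqrt (\<integral>x. (g x)\<^sup>2 \<partial>M)"
    using real_sqrt_le_mono[OF C(2)[of v]] C(1) by (intro mult_right_mono) (auto simp: real_sqrt_mult)
  finally show "norm (\<integral>x. \<iota> v x * g x \<partial>M) \<le> norm v * (sqrt C * sqrt (\<integral>x. (g x)\<^sup>2 \<partial>M))"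
    by (simp add: ac_simps)
  qed
qed

text \<open>The \<open>L\<^sup>2\<close>-limit \<open>g\<close> of \<open>\<iota> z\<^sub>j\<close> satisfies \<open>\<integral> \<iota> z\<^sub>j g \<rightarrow> \<integral> g\<^sup>2\<close>, while weak convergence
  (through the Riesz representative of \<open>v \<mapsto> \<integral> \<iota> v g\<close>) forces \<open>\<integral> \<iota> z\<^sub>j g \<rightarrow> 0\<close>; so \<open>g = 0\<close>.\<close>
lemma weakly_null_L2_limit:
  assumes wc: "weak_conv zs 0" and g: "square_integrable M g"
    and L2: "(\<lambda>j. \<integral>x. (\<iota> (zs j) x - g x)\<^sup>2 \<partial>M) \<longlonglongrightarrow> 0"
  shows "(\<lambda>j. \<integral>x. (\<iota> (zs j) x)\<^sup>2 \<partial>M) \<longlonglongrightarrow> 0"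
proof -
  define G where "G = (\<integral>x. (g x)\<^sup>2 \<partial>M)"
  obtain y where y: "\<And>v. (\<integral>x. \<iota> v x * g x \<partial>M) = inner v y"
    using iota_pairing_representation[OF g] by blast
  have lim0: "(\<lambda>j. \<integral>x. \<iota> (zs j) x * g x \<partial>M) \<longlonglongrightarrow> 0"
    using wc unfolding y weak_conv_def by simp
  have "(\<lambda>j. (\<integral>x. \<iota> (zs j) x * g x \<partial>M) - G) \<longlonglongrightarrow> 0"
  proof (rule Lim_null_comparison)
    show "\<forall>\<^sub>F j in sequentially. norm ((\<integral>x. \<iota> (zs j) x * g x \<partial>M) - G)
        \<le> sqrt (\<integral>x. (\<iota> (zs j) x - g x)\<^sup>2 \<partial>M) * sqrt G"
    proof (intro always_eventually allI)
      fix j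
      have "(\<integral>x. \<iota> (zs j) x * g x \<partial>M) - G = (\<integral>x. (\<iota> (zs j) x - g x) * g x \<partial>M)"
        unfolding G_def using square_integrable_mult_integrable[OF square_integrable_iota g] g
        by (simp add: left_diff_distrib power2_eq_square square_integrable_def)
      then show "norm ((\<integral>x. \<iota> (zs j) x * g x \<partial>M) - G) \<le> sqrt (\<integral>x. (\<iota> (zs j) x - g x)\<^sup>2 \<partial>M) * sqrt G"
        unfolding G_def
        using integral_Cauchy_Schwarz[OF square_integrable_diff[OF square_integrable_iota g] g] by simp
    qed
    show "(\<lambda>j. sqrt (\<integral>x. (\<iota> (zs j) x - g x)\<^sup>2 \<partial>M) * sqrt G) \<longlonglongrightarrow> 0"
      using tendsto_mult_left_zero[OF tendsto_real_sqrt[OF L2, unfolded real_sqrt_zero]] by simp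
  qed
  then have "(\<lambda>j. \<integral>x. \<iota> (zs j) x * g x \<partial>M) \<longlonglongrightarrow> G" by (rule LIM_zero_cancel)
  then have "G = 0" using LIMSEQ_unique[OF _ lim0] by blast
  show ?thesis
  proof (rule Lim_null_comparison)
    show "\<forall>\<^sub>F j in sequentially. norm (\<integral>x. (\<iota> (zs j) x)\<^sup>2 \<partial>M) \<le> 2 * G + 2 * (\<integral>x. (\<iota> (zs j) x - g x)\<^sup>2 \<partial>M)"
      using integral_sq_le_two_mult[OF square_integrable_iota g] unfolding G_def
      by (intro always_eventually allI) simp
    show "(\<lambda>j. 2 * G + 2 * (\<integral>x. (\<iota> (zs j) x - g x)\<^sup>2 \<partial>M)) \<longlonglongrightarrow> 0"
      using tendsto_mult_right_zero[OF L2, of 2] \<open>G = 0\<close> by (simp add: mult.commute)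
  qed
qed

lemma weak_conv_imp_L2_tendsto:
  assumes wc: "weak_conv xs ub" and bd: "bounded (range xs)"
  shows "(\<lambda>n. \<integral>x. (\<iota> (xs n) x - \<iota> ub x)\<^sup>2 \<partial>M) \<longlonglongrightarrow> 0"
proof (rule subseq_null_subseq_imp_tendsto_zero)
  fix r :: "nat \<Rightarrow> nat" assume r: "strict_mono r"
  obtain B where B: "\<And>n. norm (xs n) \<le> B" using bd unfolding bounded_iff by blast
  have "norm (xs (r n) - ub) \<le> B + norm ub" for n
    using norm_triangle_ineq4[of "xs (r n)" ub] B[of "r n"] by linarith
  then have "bounded (range (\<lambda>n. xs (r n) - ub))" unfolding bounded_iff by blast
  then obtain r' :: "nat \<Rightarrow> nat" and g where r': "strict_mono r'" "square_integrable M g"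
    and L2: "(\<lambda>j. \<integral>x. (\<iota> (xs (r (r' j)) - ub) x - g x)\<^sup>2 \<partial>M) \<longlonglongrightarrow> 0"
    by (rule iota_compact[where vs = "\<lambda>n. xs (r n) - ub"]) auto
  have "weak_conv (\<lambda>j. xs (r (r' j)) - ub) 0"
    unfolding weak_conv_def inner_diff_left
  proof
    fix y
    have "(\<lambda>j. inner (xs (r (r' j))) y) \<longlonglongrightarrow> inner ub y"
      using LIMSEQ_subseq_LIMSEQ[OF wc[unfolded weak_conv_def, rule_format, of y] strict_mono_o[OF r r'(1)]]
      by (simp add: o_def)
    then show "(\<lambda>j. inner (xs (r (r' j))) y - inner ub y) \<longlonglongrightarrow> inner 0 y"
      using LIM_zero by simp
  qed
  from weakly_null_L2_limit[OF this r'(2) L2]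
  have "(\<lambda>j. \<integral>x. (\<iota> (xs (r (r' j)) - ub) x)\<^sup>2 \<partial>M) \<longlonglongrightarrow> 0" .
  moreover have "(\<integral>x. (\<iota> (xs (r (r' j)) - ub) x)\<^sup>2 \<partial>M) = (\<integral>x. (\<iota> (xs (r (r' j))) x - \<iota> ub x)\<^sup>2 \<partial>M)" for j
    by (rule integral_cong_AE) (use iota_diff_AE[of "xs (r (r' j))" ub] in \<open>auto elim!: AE_mp\<close>)
  ultimately show "\<exists>r'. strict_mono r' \<and> (\<lambda>j. \<integral>x. (\<iota> (xs (r (r' j))) x - \<iota> ub x)\<^sup>2 \<partial>M) \<longlonglongrightarrow> 0"
    using r'(1) by auto
qed

lemma psi_integral_approx:
  assumes e: "e > 0"
  shows "\<bar>psi_integral e v - (\<integral>x. \<bar>\<iota> v x\<bar> powr p \<partial>M)\<bar> \<le> e powr p * measure M (space M)"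
proof -
  interpret finite_measure M by (rule finite_measure_M)
  have int: "integrable M (\<lambda>x. \<bar>\<iota> v x\<bar> powr p)" "integrable M (\<lambda>x. psi p e ((\<iota> v x)\<^sup>2))"
    using integrable_abs_powr[OF square_integrable_iota] integrable_psi_iota[OF e] p by simp_all
  have "norm (psi_integral e v - (\<integral>x. \<bar>\<iota> v x\<bar> powr p \<partial>M))
      = norm (\<integral>x. psi p e ((\<iota> v x)\<^sup>2) - \<bar>\<iota> v x\<bar> powr p \<partial>M)"
    unfolding psi_integral_def using int by simp
  also have "\<dots> \<le> (\<integral>x. e powr p \<partial>M)"
  proof (rule Bochner_Integration.integral_norm_bound_integral)
    show "norm (psi p e ((\<iota> v x)\<^sup>2) - \<bar>\<iota> v x\<bar> powr p) \<le> e powr p" for x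
      using abs_psi_minus_powr_le[OF p e, of "(\<iota> v x)\<^sup>2"] by (simp add: sq_powr_half_abs)
  qed (use int in simp_all)
  finally show ?thesis by (simp add: mult.commute)
qed

lemma weighted_inner_self_approx:
  assumes e: "e > 0"
  shows "\<bar>2 * weighted_inner e v v v - p * (\<integral>x. \<bar>\<iota> v x\<bar> powr p \<partial>M)\<bar> \<le> p * e powr p * measure M (space M)"
proof -
  interpret finite_measure M by (rule finite_measure_M)
  have int: "integrable M (\<lambda>x. \<bar>\<iota> v x\<bar> powr p)" "integrable M (\<lambda>x. dpsi p e ((\<iota> v x)\<^sup>2) * (\<iota> v x * \<iota> v x))"
    using integrable_abs_powr[OF square_integrable_iota] integrable_weighted_inner[OF e] p by simp_all
  have "norm (2 * weighted_inner e v v v - p * (\<integral>x. \<bar>\<iota> v x\<bar> powr p \<partial>M))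
      = norm (\<integral>x. 2 * dpsi p e ((\<iota> v x)\<^sup>2) * (\<iota> v x)\<^sup>2 - p * \<bar>\<iota> v x\<bar> powr p \<partial>M)"
    unfolding weighted_inner_def using int by (simp add: power2_eq_square mult.assoc)
  also have "\<dots> \<le> (\<integral>x. p * e powr p \<partial>M)"
  proof (rule Bochner_Integration.integral_norm_bound_integral)
    show "norm (2 * dpsi p e ((\<iota> v x)\<^sup>2) * (\<iota> v x)\<^sup>2 - p * \<bar>\<iota> v x\<bar> powr p) \<le> p * e powr p" for x
      using abs_dpsi_mult_minus_powr_le[OF p e, of "(\<iota> v x)\<^sup>2"] by (simp add: sq_powr_half_abs)
  qed (use int in \<open>simp_all add: power2_eq_square mult.assoc\<close>)
  finally show ?thesis by (simp add: mult_ac)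
qed

lemma psi_integral_tendsto:
  assumes e: "\<And>n. e n > 0" "e \<longlonglongrightarrow> 0" and W: "(\<lambda>n. \<integral>x. \<bar>\<iota> (v n) x\<bar> powr p \<partial>M) \<longlonglongrightarrow> W"
  shows "(\<lambda>n. psi_integral (e n) (v n)) \<longlonglongrightarrow> W"
proof (rule tendsto_approx[OF W])
  show "\<bar>psi_integral (e n) (v n) - (\<integral>x. \<bar>\<iota> (v n) x\<bar> powr p \<partial>M)\<bar> \<le> e n powr p * measure M (space M)" for n
    by (rule psi_integral_approx[OF e(1)])
  show "(\<lambda>n. e n powr p * measure M (space M)) \<longlonglongrightarrow> 0"
    using powr_tendsto_zero[OF e p(1)] by (rule tendsto_mult_left_zero)
qed

lemma weighted_inner_self_tendsto:
  assumes e: "\<And>n. e n > 0" "e \<longlonglongrightarrow> 0" and W: "(\<lambda>n. \<integral>x. \<bar>\<iota> (v n) x\<bar> powr p \<partial>M) \<longlonglongrightarrow> W"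
  shows "(\<lambda>n. 2 * weighted_inner (e n) (v n) (v n) (v n)) \<longlonglongrightarrow> p * W"
proof (rule tendsto_approx[OF tendsto_mult_left[OF W]])
  show "\<bar>2 * weighted_inner (e n) (v n) (v n) (v n) - p * (\<integral>x. \<bar>\<iota> (v n) x\<bar> powr p \<partial>M)\<bar>
      \<le> p * e n powr p * measure M (space M)" for n
    by (rule weighted_inner_self_approx[OF e(1)])
  show "(\<lambda>n. p * e n powr p * measure M (space M)) \<longlonglongrightarrow> 0"
    using tendsto_mult_right_zero[OF powr_tendsto_zero[OF e p(1)], of p]
    by (rule tendsto_mult_left_zero)
qed

end

section \<open>Iterates of Algorithm A\<close>

locale algA_iteration = Lp_regularization +
  fixes \<epsilon> Ls :: "nat \<Rightarrow> real" and u and l and c :: real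
  assumes eps_decseq: "decseq \<epsilon>" and eps_pos: "\<And>k. \<epsilon> k > 0" and eps_lim: "\<epsilon> \<longlonglongrightarrow> 0"
    and minimizer: "\<And>k. is_minimizer (Qmodel F F' \<alpha> \<beta> p \<Omega> \<iota> (\<epsilon> k) (u k) (Ls k)) (u (Suc k))"
    and descent: "\<And>k. descent_cond F F' (u k) (Ls k) (u (Suc k))"
    and Ls_nonneg: "\<And>k. Ls k \<ge> 0"
    and F_lower: "\<And>v. F v \<ge> blinfun_apply l v + c"
begin

lemma energy_telescoping:
  "energy (\<epsilon> n) (u n) + \<alpha> / 2 * (\<Sum>k<n. (norm (u (Suc k) - u k))\<^sup>2) \<le> energy (\<epsilon> 0) (u 0)"
proof (induction n)
  case (Suc n)
  have "energy (\<epsilon> (Suc n)) (u (Suc n)) \<le> energy (\<epsilon> n) (u (Suc n))"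
    using eps_pos eps_decseq by (intro energy_mono_eps) (auto simp: decseq_Suc_iff)
  also have "\<dots> \<le> energy (\<epsilon> n) (u n) - \<alpha> / 2 * (norm (u (Suc n) - u n))\<^sup>2"
    by (rule energy_descent[OF eps_pos minimizer descent])
  finally show ?case using Suc.IH by (simp add: algebra_simps)
qed simp

text \<open>Completing the square: \<open>\<alpha>/2 x\<^sup>2 - \<parallel>l\<parallel> x \<ge> \<alpha>/4 x\<^sup>2 - \<parallel>l\<parallel>\<^sup>2/\<alpha>\<close>.\<close>
lemma iterates_energy_bound:
  "\<alpha> / 4 * (norm (u n))\<^sup>2 + \<alpha> / 2 * (\<Sum>k<n. (norm (u (Suc k) - u k))\<^sup>2)
    \<le> energy (\<epsilon> 0) (u 0) - c + (norm l)\<^sup>2 / \<alpha>"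
proof -
  have sq: "\<alpha> / 4 * x\<^sup>2 - (norm l)\<^sup>2 / \<alpha> \<le> \<alpha> / 2 * x\<^sup>2 - norm l * x" for x
  proof -
    have "0 \<le> (\<alpha> * x / 2 - norm l)\<^sup>2 / \<alpha>" using \<alpha> by simp
    also have "\<dots> = \<alpha> / 2 * x\<^sup>2 - norm l * x - (\<alpha> / 4 * x\<^sup>2 - (norm l)\<^sup>2 / \<alpha>)"
      using \<alpha> by (simp add: power2_eq_square field_simps)
    finally show ?thesis by simp
  qed
  then show ?thesis
    using energy_telescoping[of n] energy_lower_bound[OF eps_pos[of n] F_lower, of "u n"]
      sq[of "norm (u n)"] by linarith
qed

lemma steps_tendsto_zero: "(\<lambda>k. norm (u (Suc k) - u k)) \<longlonglongrightarrow> 0"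
proof -
  define d where "d k = (norm (u (Suc k) - u k))\<^sup>2" for k
  define B where "B = energy (\<epsilon> 0) (u 0) - c + (norm l)\<^sup>2 / \<alpha>"
  have "(\<Sum>k<n. d k) \<le> 2 / \<alpha> * B" for n
  proof -
    have "0 \<le> \<alpha> / 4 * (norm (u n))\<^sup>2" using \<alpha> by simp
    then have "\<alpha> / 2 * (\<Sum>k<n. d k) \<le> B"
      using iterates_energy_bound[of n] unfolding d_def B_def by linarith
    then show ?thesis using \<alpha> by (simp add: field_simps)
  qed
  then have "summable d" by (intro summableI_nonneg_bounded) (simp_all add: d_def)
  then have "(\<lambda>k. sqrt (d k)) \<longlonglongrightarrow> sqrt 0"
    by (intro tendsto_real_sqrt summable_LIMSEQ_zero)
  then show ?thesis by (simp add: d_def)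
qed

lemma iterates_bounded: "bounded (range u)"
proof -
  define B where "B = energy (\<epsilon> 0) (u 0) - c + (norm l)\<^sup>2 / \<alpha>"
  have "(norm (u n))\<^sup>2 \<le> 4 / \<alpha> * B" for n
  proof -
    have "0 \<le> \<alpha> / 2 * (\<Sum>k<n. (norm (u (Suc k) - u k))\<^sup>2)" using \<alpha> by (simp add: sum_nonneg)
    then have "\<alpha> / 4 * (norm (u n))\<^sup>2 \<le> B"
      using iterates_energy_bound[of n] unfolding B_def by linarith
    then show ?thesis using \<alpha> by (simp add: field_simps)
  qed
  then have "norm (u n) \<le> sqrt (4 / \<alpha> * B)" for n
    using real_le_rsqrt by blast
  then show ?thesis unfolding bounded_iff by blast
qed

lemma iterates_L2_tendsto:
  assumes kn: "strict_mono kn" and wc: "weak_conv (\<lambda>n. u (kn n)) ub"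
  shows "(\<lambda>n. \<integral>x. (\<iota> (u (kn n)) x - \<iota> ub x)\<^sup>2 \<partial>M) \<longlonglongrightarrow> 0" (is "?a \<longlonglongrightarrow> 0")
    and "(\<lambda>n. \<integral>x. (\<iota> (u (Suc (kn n))) x - \<iota> ub x)\<^sup>2 \<partial>M) \<longlonglongrightarrow> 0"
proof -
  show a: "?a \<longlonglongrightarrow> 0"
    using iterates_bounded by (intro weak_conv_imp_L2_tendsto[OF wc]) (auto intro: bounded_subset)
  obtain C where C: "C \<ge> 0" "\<And>v. (\<integral>x. (\<iota> v x)\<^sup>2 \<partial>M) \<le> C * (norm v)\<^sup>2"
    using iota_L2_bound by blast
  have "(\<lambda>n. norm (u (Suc (kn n)) - u (kn n))) \<longlonglongrightarrow> 0"
    using LIMSEQ_subseq_LIMSEQ[OF steps_tendsto_zero kn] by (simp add: o_def)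
  from tendsto_mult_right_zero[OF tendsto_power[OF this, of 2, unfolded power_zero_numeral]]
  have step: "(\<lambda>n. C * (norm (u (Suc (kn n)) - u (kn n)))\<^sup>2) \<longlonglongrightarrow> 0" .
  have sq: "square_integrable M (\<lambda>x. \<iota> v x - \<iota> w x)" for v w
    by (rule square_integrable_diff[OF square_integrable_iota square_integrable_iota])
  have bound: "(\<integral>x. (\<iota> (u (Suc (kn n))) x - \<iota> ub x)\<^sup>2 \<partial>M)
      \<le> 2 * ?a n + 2 * (C * (norm (u (Suc (kn n)) - u (kn n)))\<^sup>2)" for n
  proof -
    have "(\<integral>x. (\<iota> (u (Suc (kn n))) x - \<iota> ub x)\<^sup>2 \<partial>M)
        \<le> 2 * ?a n + 2 * (\<integral>x. (\<iota> (u (Suc (kn n))) x - \<iota> ub x - (\<iota> (u (kn n)) x - \<iota> ub x))\<^sup>2 \<partial>M)"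
      by (rule integral_sq_le_two_mult[OF sq sq])
    also have "(\<integral>x. (\<iota> (u (Suc (kn n))) x - \<iota> ub x - (\<iota> (u (kn n)) x - \<iota> ub x))\<^sup>2 \<partial>M)
        = (\<integral>x. (\<iota> (u (Suc (kn n)) - u (kn n)) x)\<^sup>2 \<partial>M)"
      by (rule integral_cong_AE) (use iota_diff_AE[of "u (Suc (kn n))" "u (kn n)"] in \<open>auto elim!: AE_mp\<close>)
    also have "\<dots> \<le> C * (norm (u (Suc (kn n)) - u (kn n)))\<^sup>2" by (rule C(2))
    finally show ?thesis by simp
  qed
  show "(\<lambda>n. \<integral>x. (\<iota> (u (Suc (kn n))) x - \<iota> ub x)\<^sup>2 \<partial>M) \<longlonglongrightarrow> 0"
  proof (rule Lim_null_comparison)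
    show "\<forall>\<^sub>F n in sequentially. norm (\<integral>x. (\<iota> (u (Suc (kn n))) x - \<iota> ub x)\<^sup>2 \<partial>M)
        \<le> 2 * ?a n + 2 * (C * (norm (u (Suc (kn n)) - u (kn n)))\<^sup>2)"
      using bound by (intro always_eventually allI) simp
    show "(\<lambda>n. 2 * ?a n + 2 * (C * (norm (u (Suc (kn n)) - u (kn n)))\<^sup>2)) \<longlonglongrightarrow> 0"
      using tendsto_add[OF tendsto_mult_right_zero[OF a] tendsto_mult_right_zero[OF step], of 2 2]
      by simp
  qed
qed

lemma model_gap_tendsto_zero:
  assumes kn: "strict_mono kn" and F'_lim: "(\<lambda>n. F' (u (kn n))) \<longlonglongrightarrow> G"
  shows "(\<lambda>n. - blinfun_apply (F' (u (kn n))) (u (Suc (kn n)) - u (kn n))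
              - \<alpha> / 2 * ((norm (u (Suc (kn n))))\<^sup>2 - (norm (u (kn n)))\<^sup>2)) \<longlonglongrightarrow> 0"
proof -
  define d where "d n = norm (u (Suc (kn n)) - u (kn n))" for n
  have d: "d \<longlonglongrightarrow> 0"
    using LIMSEQ_subseq_LIMSEQ[OF steps_tendsto_zero kn] unfolding d_def[abs_def] by (simp add: o_def)
  obtain R where R: "\<And>k. norm (u k) \<le> R" using iterates_bounded unfolding bounded_iff by blast
  have lin: "(\<lambda>n. blinfun_apply (F' (u (kn n))) (u (Suc (kn n)) - u (kn n))) \<longlonglongrightarrow> 0"
  proof (rule Lim_null_comparison)
    show "\<forall>\<^sub>F n in sequentially. norm (blinfun_apply (F' (u (kn n))) (u (Suc (kn n)) - u (kn n)))
        \<le> norm (F' (u (kn n))) * d n"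
      unfolding d_def by (intro always_eventually allI norm_blinfun)
    show "(\<lambda>n. norm (F' (u (kn n))) * d n) \<longlonglongrightarrow> 0"
      using tendsto_mult[OF tendsto_norm[OF F'_lim] d] by simp
  qed
  have quad: "(\<lambda>n. (norm (u (Suc (kn n))))\<^sup>2 - (norm (u (kn n)))\<^sup>2) \<longlonglongrightarrow> 0"
  proof (rule Lim_null_comparison)
    have "\<bar>(norm (u (Suc (kn n))))\<^sup>2 - (norm (u (kn n)))\<^sup>2\<bar>
        = \<bar>norm (u (Suc (kn n))) - norm (u (kn n))\<bar> * (norm (u (Suc (kn n))) + norm (u (kn n)))" for n
    proof -
      have "\<forall>a b :: real. b\<^sup>2 - a\<^sup>2 = (b - a) * (b + a)" by (simp add: power2_eq_square algebra_simps)
      then show ?thesis by (simp add: abs_mult)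
    qed
    also have "\<dots> n \<le> d n * (2 * R)" for n
      unfolding d_def using R[of "Suc (kn n)"] R[of "kn n"]
      by (intro mult_mono norm_triangle_ineq3) auto
    finally show "\<forall>\<^sub>F n in sequentially. norm ((norm (u (Suc (kn n))))\<^sup>2 - (norm (u (kn n)))\<^sup>2) \<le> d n * (2 * R)"
      by (intro always_eventually allI) simp
    show "(\<lambda>n. d n * (2 * R)) \<longlonglongrightarrow> 0" using tendsto_mult_left_zero[OF d] by simp
  qed
  from tendsto_diff[OF tendsto_minus[OF lin] tendsto_mult_right_zero[OF quad, of "\<alpha> / 2"]]
  show ?thesis by simp
qed

lemma weighted_inner_next_tendsto:
  assumes kn: "strict_mono kn" and wc: "weak_conv (\<lambda>n. u (kn n)) ub"
    and F'_lim: "(\<lambda>n. F' (u (kn n))) \<longlonglongrightarrow> G"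
  shows "(\<lambda>n. 2 * weighted_inner (\<epsilon> (kn n)) (u (kn n)) (u (Suc (kn n))) (u (Suc (kn n))))
    \<longlonglongrightarrow> p * (\<integral>x. \<bar>\<iota> ub x\<bar> powr p \<partial>M)"
proof -
  interpret finite_measure M by (rule finite_measure_M)
  define a where "a n = u (kn n)" for n
  define b where "b n = u (Suc (kn n))" for n
  define e where "e n = \<epsilon> (kn n)" for n
  define W where "W = (\<integral>x. \<bar>\<iota> ub x\<bar> powr p \<partial>M)"
  define J where "J n = weighted_inner (e n) (a n) (a n) (a n)" for n
  define I where "I n = weighted_inner (e n) (a n) (b n) (b n)" for n
  have e: "\<And>n. e n > 0" "e \<longlonglongrightarrow> 0"
    using eps_pos LIMSEQ_subseq_LIMSEQ[OF eps_lim kn] unfolding e_def[abs_def] by (simp_all add: o_def)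
  have Wa: "(\<lambda>n. \<integral>x. \<bar>\<iota> (a n) x\<bar> powr p \<partial>M) \<longlonglongrightarrow> W"
    and Wb: "(\<lambda>n. \<integral>x. \<bar>\<iota> (b n) x\<bar> powr p \<partial>M) \<longlonglongrightarrow> W"
    unfolding W_def a_def b_def using iterates_L2_tendsto[OF kn wc] p
    by (auto intro!: integral_abs_powr_tendsto square_integrable_iota)
  have "(\<lambda>n. I n - J n) \<longlonglongrightarrow> 0"
  proof (rule real_tendsto_sandwich[OF always_eventually always_eventually])
    show "\<forall>n. psi_integral (e n) (b n) - psi_integral (e n) (a n) \<le> I n - J n"
      using psi_integral_le_linearization[OF e(1)] unfolding I_def J_def by (simp add: algebra_simps)
    show "\<forall>n. I n - J n \<le> (- blinfun_apply (F' (a n)) (b n - a n) - \<alpha> / 2 * ((norm (b n))\<^sup>2 - (norm (a n))\<^sup>2)) / \<beta>"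
      using Q_minimizer_weighted_inner_le[OF eps_pos minimizer Ls_nonneg] \<beta>
      unfolding I_def J_def a_def b_def e_def by (simp add: field_simps)
    show "(\<lambda>n. psi_integral (e n) (b n) - psi_integral (e n) (a n)) \<longlonglongrightarrow> 0"
      using tendsto_diff[OF psi_integral_tendsto[OF e Wb] psi_integral_tendsto[OF e Wa]] by simp
    show "(\<lambda>n. (- blinfun_apply (F' (a n)) (b n - a n) - \<alpha> / 2 * ((norm (b n))\<^sup>2 - (norm (a n))\<^sup>2)) / \<beta>) \<longlonglongrightarrow> 0"
      using tendsto_divide_zero[OF model_gap_tendsto_zero[OF kn F'_lim], of \<beta>]
      unfolding a_def b_def by simp
  qed
  from tendsto_add[OF weighted_inner_self_tendsto[OF e Wa] tendsto_mult_right_zero[OF this, of 2]]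
  have "(\<lambda>n. 2 * I n) \<longlonglongrightarrow> p * W" by (simp add: J_def algebra_simps)
  then show ?thesis by (simp add: I_def a_def b_def e_def W_def)
qed

end

theorem lemma7p7:
  fixes \<Omega> :: "'d::euclidean_space set"
    and \<iota> :: "'v::{real_inner, complete_space} \<Rightarrow> 'd \<Rightarrow> real"
    and F :: "'v \<Rightarrow> real" and F' :: "'v \<Rightarrow> 'v \<Rightarrow>\<^sub>L real"
    and \<alpha> \<beta> p \<gamma> Lt :: real and \<epsilon> :: "nat \<Rightarrow> real" and u0 ub :: 'v
    and Ls :: "nat \<Rightarrow> real" and u :: "nat \<Rightarrow> 'v" and kn :: "nat \<Rightarrow> nat"
  assumes dom: "lipschitz_domain \<Omega>" "bounded \<Omega>"
    and emb: "compact_dense_L2_embedding \<Omega> \<iota>"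
    and F_wlsc: "\<forall>us v. weak_conv us v \<longrightarrow> ereal (F v) \<le> liminf (\<lambda>n. ereal (F (us n)))"
    and F_affine_lb: "\<exists>l :: 'v \<Rightarrow>\<^sub>L real. \<exists>c. \<forall>v. F v \<ge> blinfun_apply l v + c"
    and F_deriv: "\<forall>v. (F has_derivative blinfun_apply (F' v)) (at v)"
    and F'_cont: "continuous_on UNIV F'"
    and params: "\<alpha> > 0" "\<beta> > 0" "0 < p" "p < 1"
    and F'_compl_cont: "\<forall>us v. weak_conv us v \<longrightarrow> (\<lambda>n. F' (us n)) \<longlonglongrightarrow> F' v"
    and F'_lip: "\<forall>B. bounded B \<longrightarrow>
                   (\<exists>M. \<forall>v\<in>B. \<forall>w\<in>B. norm (F' v - F' w) \<le> M * norm (v - w))"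
    and eps: "decseq \<epsilon>" "\<epsilon> \<longlonglongrightarrow> 0" "\<forall>k. \<epsilon> k > 0"
    and alg_params: "\<gamma> > 1" "Lt > 0"
    and alg: "algA_sequence F F' \<alpha> \<beta> p \<Omega> \<iota> \<epsilon> \<gamma> Lt u0 Ls u"
    and sub: "strict_mono kn"
    and wconv: "weak_conv (\<lambda>n. u (kn n)) ub"
  shows "(\<lambda>n. 2 * (\<integral>x. dpsi p (\<epsilon> (kn n)) ((\<iota> (u (kn n)) x)\<^sup>2) * (\<iota> (u (Suc (kn n))) x)\<^sup>2
                   \<partial>lebesgue_on \<Omega>))
         \<longlonglongrightarrow> p * (\<integral>x. \<bar>\<iota> ub x\<bar> powr p \<partial>lebesgue_on \<Omega>)"
proof -
  obtain l c where lb: "\<And>v. F v \<ge> blinfun_apply l v + c" using F_affine_lb by blast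
  have steps: "is_minimizer (Qmodel F F' \<alpha> \<beta> p \<Omega> \<iota> (\<epsilon> k) (u k) (Ls k)) (u (Suc k))"
    "descent_cond F F' (u k) (Ls k) (u (Suc k))" "Ls k \<in> L_candidates Lt \<gamma>" for k
    using alg by (auto simp: algA_sequence_def)
  have "Ls k \<ge> 0" for k
    using steps(3)[of k] alg_params by (auto simp: L_candidates_def)
  moreover have "\<Omega> \<in> lmeasurable"
    using dom by (intro lmeasurable_open) (auto simp: lipschitz_domain_def)
  ultimately interpret algA_iteration \<Omega> \<iota> F F' \<alpha> \<beta> p \<epsilon> Ls u l c
    using emb params eps steps lb by unfold_locales auto
  have "(\<lambda>n. F' (u (kn n))) \<longlonglongrightarrow> F' ub" using F'_compl_cont wconv by blast
  from weighted_inner_next_tendsto[OF sub wconv this]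
  show ?thesis by (simp add: weighted_inner_def power2_eq_square mult.assoc)
qed

end
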